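(* Consider the polynomial representation of $\mathbf H^{\mathrm{gr}}_N[c_1,\dots,c_{l-1}]$ by rational Demazure–Lusztig operators and the restriction map $\operatorname{Res}$ described in the context. (1) For each $i$, $\operatorname{Res}X_i=\sum_{j\le i}g_j\mathsf u_j$ for some rational functions $g_j=g_j(w_1,\dots,w_N)$, and the leading term of $\operatorname{Res}X_i$ is $g_i\mathsf u_i$. Moreover the leading term of $\operatorname{Res}X_N$ is $\prod_{j\ne N}\frac{w_N-w_j-\mathbf t}{w_N-w_j}\mathsf u_N$. (2) For each $i$, $\operatorname{Res}X_i^{-1}=\sum_{j\ge i}g'_j\mathsf u_j^{-1}$ for some rational functions $g'_j$, and the leading term of $\operatorname{Res}X_i^{-1}$ is $g'_i\mathsf u_i^{-1}$. Moreover the leading term of $\operatorname{Res}X_1^{-1}$ is $\prod_{j\ne1}\frac{w_1-w_j+\mathbf t}{w_1-w_j}\mathsf u_1^{-1}$. (3) For each $i$, $\operatorname{Res}Y_i=\sum_{j\ge i}g''_j\mathsf u_j^{-1}$ for some rational functions $g''_j$, and the leading term of $\operatorname{Res}Y_i$ is $g''_i\mathsf u_i^{-1}$. Moreover the leading term of $\operatorname{Res}Y_1$ is $\prod_{k=1}^l(w_1-\hbar-z_k)\prod_{j\ne1}\frac{w_1-w_j+\mathbf t}{w_1-w_j}\mathsf u_1^{-1}$.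
   Context: $\mathbf H^{\mathrm{gr}}_N$ is the $\mathbb C[\hbar,\mathbf t]$-algebra generated by $s_1,\dots,s_{N-1}$, $X_i^{\pm1}$, $w_i$ ($1\le i\le N$) with relations: $w$'s commute, $X$'s commute, $X_iX_i^{-1}=X_i^{-1}X_i=1$, Coxeter relations of $\mathfrak S_N$ for the $s_i$ ($s_{ij}$ = transposition $(ij)$), $s_iw_i=w_{i+1}s_i-\mathbf t$, $s_iw_{i+1}=w_is_i+\mathbf t$, $s_iw_j=w_js_i$ ($j\ne i,i+1$), $\sigma X_i^{\pm1}=X_{\sigma(i)}^{\pm1}\sigma$, $[w_i,X_j]=-\mathbf tX_js_{ji}$ ($i>j$), $-\mathbf tX_is_{ij}$ ($i<j$), $[w_i,X_i]=-\hbar X_i+\mathbf t\sum_{k<i}X_ks_{ki}+\mathbf t\sum_{k>i}X_is_{ik}$. Let $l\ge1$, $\varepsilon$ a primitive $l$-th root of unity, $c_1,\dots,c_{l-1}$ indeterminates, $z_k=-l^{-1}\big((l-k)\hbar+\sum_{m=1}^{l-1}(1+\varepsilon^m+\dots+\varepsilon^{(k-1)m})c_m\big)$, and define $Y_i=\prod_{k=1}^l\big(w_i-\hbar-z_k+\mathbf t\sum_{j>i}s_{ij}\big)X_i^{-1}\in\mathbf H^{\mathrm{gr}}_N[c_1,\dots,c_{l-1}]$ (factors ordered $k=1,\dots,l$ left to right; this is the image of $e_\Gamma(l^{-1}\eta_i)^le_\Gamma$ under Oblomkov's embedding of the partially symmetrized cyclotomic rational Cherednik algebra). Representation: on $P=\mathbb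 C[\hbar,\mathbf t,c_1,\dots,c_{l-1}][w_1,\dots,w_N]$, $w_i$ acts by multiplication; $s_i$ ($1\le i\le N-1$) acts by $s_i^w+\frac{\mathbf t}{w_i-w_{i+1}}(s_i^w-1)$, where $s_i^w$ swaps the variables $w_i,w_{i+1}$; let $\pi$ be the operator $(\pi g)(w_1,\dots,w_N)=g(w_2,\dots,w_N,w_1+\hbar)$; $X_1$ acts by $\pi s_{N-1}\cdots s_1$ (with $s_i$ the operators above), $X_{i+1}=s_iX_is_i$, and $X_i^{-1}$ acts by the inverse operator. For $\lambda\in\mathbb Z^N$ let $\mathsf u^\lambda$ be the shift operator $(\mathsf u^\lambda g)(w)=g(w_1+\lambda_1\hbar,\dots,w_N+\lambda_N\hbar)$, $\mathsf u_i=\mathsf u^{\varepsilon_i}$. Every element acts by an operator $\sum_{\lambda,\sigma}g_{\lambda,\sigma}\mathsf u^\lambda\sigma$ ($\sigma\in\mathfrak S_N$ permuting variables, $g_{\lambda,\sigma}$ rational functions in $w$), and $\operatorname{Res}$ of it, i.e. its restriction to symmetric polynomials, is the difference operator $\sum_\lambda(\sum_\sigma g_{\lambda,\sigma})\mathsf u^\lambda$. Order: on $P_{\mathrm{wt}}=\bigoplus_i\mathbb Z\varepsilon_i$, $\lambda\le\mu$ iff $\mu-\lambda\in\sum_{i<j}\mathbb Z_{\ge0}(\varepsilon_i-\varepsilon_j)$; $\lambda^+$ is the unique dominant (nonincreasing coordinates) element of the $\mathfrak S_N$-orbit of $\lambda$; $\lambda\lessdot\mu$ iff $\lambda^+<\mu^+$,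 or $\lambda^+=\mu^+$ and $\lambda>\mu$. The leading term of a difference operator $\sum_\lambda g_\lambda\mathsf u^\lambda$ is $g_{\lambda_0}\mathsf u^{\lambda_0}$ where $g_{\lambda_0}\ne0$ and every other $\lambda$ with $g_\lambda\neq0$ satisfies $\lambda\lessdot\lambda_0$. *)

theory Defs
  imports Complex_Main "HOL-Library.Poly_Mapping" "HOL-Computational_Algebra.Fraction_Field"
          "HOL-Combinatorics.Permutations"
begin

type_synonym mono = "nat \<Rightarrow>\<^sub>0 nat"
type_synonym mpoly = "mono \<Rightarrow>\<^sub>0 complex"
type_synonym ratf = "mpoly fract"

text \<open>Variable encoding: 0 = hbar, 1 = t, 2*m+2 = c_m, 2*i+3 = w_i.\<close>

definition widx :: "nat \<Rightarrow> nat" where "widx i = 2 * i + 3"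
definition cidx :: "nat \<Rightarrow> nat" where "cidx m = 2 * m + 2"

definition pvar :: "nat \<Rightarrow> mpoly" where
  "pvar v = Poly_Mapping.single (Poly_Mapping.single v 1) 1"

definition rvar :: "nat \<Rightarrow> ratf" where "rvar v = Fract (pvar v) 1"

definition hb :: ratf where "hb = rvar 0"
definition tt :: ratf where "tt = rvar 1"
definition cv :: "nat \<Rightarrow> ratf" where "cv m = rvar (cidx m)"
definition wv :: "nat \<Rightarrow> ratf" where "wv i = rvar (widx i)"

definition cst :: "complex \<Rightarrow> ratf" where
  "cst z = Fract (Poly_Mapping.single 0 z) 1"

definition psubst :: "(nat \<Rightarrow> mpoly) \<Rightarrow> mpoly \<Rightarrow> mpoly" where
  "psubst s p = (\<Sum>m\<in>Poly_Mapping.keys p.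
      Poly_Mapping.single 0 (Poly_Mapping.lookup p m) *
      (\<Prod>v\<in>Poly_Mapping.keys m. s v ^ Poly_Mapping.lookup m v))"

text \<open>Extension to fractions (well defined for the injective substitutions used below).\<close>
definition rsubst :: "(nat \<Rightarrow> mpoly) \<Rightarrow> ratf \<Rightarrow> ratf" where
  "rsubst s q = (let r = (SOME r. snd r \<noteq> 0 \<and> q = Fract (fst r) (snd r))
                 in Fract (psubst s (fst r)) (psubst s (snd r)))"

definition wmap :: "(nat \<Rightarrow> mpoly) \<Rightarrow> nat \<Rightarrow> mpoly" where
  "wmap h v = (if 3 \<le> v \<and> odd v then h ((v - 3) div 2) else pvar v)"

definition wsubst :: "(nat \<Rightarrow> mpoly) \<Rightarrow> ratf \<Rightarrow> ratf" where
  "wsubst h = rsubst (wmap h)"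

text \<open>Shift operator u^lambda: w_i \<mapsto> w_i + lambda_i hbar.\<close>
definition shift :: "(nat \<Rightarrow> int) \<Rightarrow> ratf \<Rightarrow> ratf" where
  "shift lam = wsubst (\<lambda>i. pvar (widx i) + of_int (lam i) * pvar 0)"

definition permv :: "(nat \<Rightarrow> nat) \<Rightarrow> ratf \<Rightarrow> ratf" where
  "permv \<sigma> = wsubst (\<lambda>i. pvar (widx (\<sigma> i)))"

definition sw :: "nat \<Rightarrow> ratf \<Rightarrow> ratf" where
  "sw i = permv (Transposition.transpose i (Suc i))"

definition piop :: "nat \<Rightarrow> ratf \<Rightarrow> ratf" where
  "piop N = wsubst (\<lambda>i. if 1 \<le> i \<and> i < N then pvar (widx (Suc i))
                        else if i = N then pvar (widx 1) + pvar 0 else pvar (widx i))"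

type_synonym op = "ratf \<Rightarrow> ratf"

definition sop :: "nat \<Rightarrow> op" where
  "sop i f = sw i f + tt / (wv i - wv (Suc i)) * (sw i f - f)"

fun schain :: "nat \<Rightarrow> op" where
  "schain 0 = id"
| "schain (Suc k) = sop (Suc k) \<circ> schain k"

fun Xop :: "nat \<Rightarrow> nat \<Rightarrow> op" where
  "Xop N 0 = id"
| "Xop N (Suc 0) = piop N \<circ> schain (N - 1)"
| "Xop N (Suc (Suc i)) = sop (Suc i) \<circ> Xop N (Suc i) \<circ> sop (Suc i)"

definition Xinv :: "nat \<Rightarrow> nat \<Rightarrow> op" where
  "Xinv N i = inv (Xop N i)"

fun sij :: "nat \<Rightarrow> nat \<Rightarrow> op" where
  "sij i 0 = id"
| "sij i (Suc j) = (if Suc j \<le> i then id else if j = i then sop i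
                    else sop j \<circ> sij i j \<circ> sop j)"

definition zk :: "nat \<Rightarrow> complex \<Rightarrow> nat \<Rightarrow> ratf" where
  "zk l \<epsilon> k = - (cst (1 / of_nat l)) *
      (of_nat (l - k) * hb + (\<Sum>m=1..l-1. cst (\<Sum>a<k. \<epsilon> ^ (a * m)) * cv m))"

definition Yfac :: "nat \<Rightarrow> nat \<Rightarrow> complex \<Rightarrow> nat \<Rightarrow> nat \<Rightarrow> op" where
  "Yfac N l \<epsilon> i k f = (wv i - hb - zk l \<epsilon> k) * f + tt * (\<Sum>j\<in>{Suc i..N}. sij i j f)"

definition Yop :: "nat \<Rightarrow> nat \<Rightarrow> complex \<Rightarrow> nat \<Rightarrow> op" where
  "Yop N l \<epsilon> i = foldr (\<lambda>k acc. Yfac N l \<epsilon> i k \<circ> acc) [1..<Suc l] (Xinv N i)"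

definition wts :: "nat \<Rightarrow> (nat \<Rightarrow> int) set" where
  "wts N = {lam. \<forall>i. i \<notin> {1..N} \<longrightarrow> lam i = 0}"

definition unitv :: "nat \<Rightarrow> nat \<Rightarrow> int" where
  "unitv j = (\<lambda>k. if k = j then 1 else 0)"

definition expansion :: "nat \<Rightarrow> op \<Rightarrow> ((nat \<Rightarrow> int) \<times> (nat \<Rightarrow> nat) \<Rightarrow> ratf) \<Rightarrow> bool" where
  "expansion N A g \<longleftrightarrow>
     finite {p. g p \<noteq> 0} \<and>
     (\<forall>lam \<sigma>. g (lam, \<sigma>) \<noteq> 0 \<longrightarrow> lam \<in> wts N \<and> \<sigma> permutes {1..N}) \<and>
     (\<forall>f. A f = (\<Sum>p\<in>{p. g p \<noteq> 0}. g p * shift (fst p) (permv (snd p) f)))"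

definition Res_of :: "nat \<Rightarrow> ((nat \<Rightarrow> int) \<times> (nat \<Rightarrow> nat) \<Rightarrow> ratf) \<Rightarrow> (nat \<Rightarrow> int) \<Rightarrow> ratf" where
  "Res_of N g = (\<lambda>lam. \<Sum>\<sigma>\<in>{\<sigma>. \<sigma> permutes {1..N}}. g (lam, \<sigma>))"

text \<open>Res A: the difference operator sum_lambda D(lambda) u^lambda, as its coefficient function.\<close>
definition Res :: "nat \<Rightarrow> op \<Rightarrow> (nat \<Rightarrow> int) \<Rightarrow> ratf" where
  "Res N A = (THE D. \<exists>g. expansion N A g \<and> D = Res_of N g)"

definition has_expansion :: "nat \<Rightarrow> op \<Rightarrow> bool" where
  "has_expansion N A \<longleftrightarrow> (\<exists>g. expansion N A g)"

definition wle :: "nat \<Rightarrow> (nat \<Rightarrow> int) \<Rightarrow> (nat \<Rightarrow> int) \<Rightarrow> bool" where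
  "wle N lam mu \<longleftrightarrow> (\<exists>n :: nat \<Rightarrow> nat \<Rightarrow> nat.
      \<forall>k. mu k - lam k =
        (\<Sum>i\<in>{1..N}. \<Sum>j\<in>{i<..N}. int (n i j) * (unitv i k - unitv j k)))"

definition wlt :: "nat \<Rightarrow> (nat \<Rightarrow> int) \<Rightarrow> (nat \<Rightarrow> int) \<Rightarrow> bool" where
  "wlt N lam mu \<longleftrightarrow> wle N lam mu \<and> lam \<noteq> mu"

definition dominant :: "nat \<Rightarrow> (nat \<Rightarrow> int) \<Rightarrow> bool" where
  "dominant N mu \<longleftrightarrow> mu \<in> wts N \<and> (\<forall>i j. 1 \<le> i \<longrightarrow> i \<le> j \<longrightarrow> j \<le> N \<longrightarrow> mu j \<le> mu i)"

definition domw :: "nat \<Rightarrow> (nat \<Rightarrow> int) \<Rightarrow> nat \<Rightarrow> int" where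
  "domw N lam = (THE mu. dominant N mu \<and> (\<exists>\<sigma>. \<sigma> permutes {1..N} \<and> mu = lam \<circ> \<sigma>))"

definition lessdot :: "nat \<Rightarrow> (nat \<Rightarrow> int) \<Rightarrow> (nat \<Rightarrow> int) \<Rightarrow> bool" where
  "lessdot N lam mu \<longleftrightarrow> wlt N (domw N lam) (domw N mu) \<or>
     (domw N lam = domw N mu \<and> wlt N mu lam)"

definition leading_at :: "nat \<Rightarrow> ((nat \<Rightarrow> int) \<Rightarrow> ratf) \<Rightarrow> (nat \<Rightarrow> int) \<Rightarrow> bool" where
  "leading_at N D lam0 \<longleftrightarrow> D lam0 \<noteq> 0 \<and>
     (\<forall>lam. lam \<noteq> lam0 \<and> D lam \<noteq> 0 \<longrightarrow> lessdot N lam lam0)"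

end

theory Submission
  imports Defs
begin

text \<open>
  Every operator of the representation is a finite sum of terms g u^lam sigma, and since distinct
  field automorphisms u^lam sigma are linearly independent (Dedekind), the coefficients are unique;
  hence Res is well defined and can be computed along compositions. Because s_k fixes symmetric
  functions, Res (A s_k) = Res A, while
  Res (s_k A) (lam) = (1 + beta_k) s_k^w (Res A (s_k lam)) - beta_k Res A (lam), beta_k = t/(w_k - w_(k+1)).

  X_1 = pi s_(N-1) ... s_1 restricts to u_1, and X_(i+1) = s_i X_i s_i, so induction on i gives the
  support {u_j | j \<le> i} and the leading coefficient of Res X_i. Likewise X_i^-1 and Y_i restrict
  as s_i ... s_(N-1) pi^-1, composed for Y_i with multiplication by prod_k (w_1 - hbar - z_k)
  (each factor of Y_1 passes through X_1 as multiplication by w_1 - z_k); every term of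
  s_i ... s_(N-1) pi^-1 has the form u_m^-1 sigma with sigma 1 = m \<ge> i. The leading coefficients
  are products of nonzero linear forms, and all u_j (resp. u_j^-1) share one dominant weight, so
  the order on them is the dominance order.
\<close>

section \<open>Polynomial substitutions\<close>

definition monom_subst :: "(nat \<Rightarrow> mpoly) \<Rightarrow> mono \<Rightarrow> mpoly" where
  "monom_subst s m = (\<Prod>v\<in>Poly_Mapping.keys m. s v ^ Poly_Mapping.lookup m v)"

lemma psubst_monom_subst: "psubst s p = (\<Sum>m\<in>Poly_Mapping.keys p. Poly_Mapping.single 0 (Poly_Mapping.lookup p m) * monom_subst s m)"
  by (simp add: psubst_def monom_subst_def)

lemma psubst_superset:
  assumes "finite A" "Poly_Mapping.keys p \<subseteq> A"
  shows "psubst s p = (\<Sum>m\<in>A. Poly_Mapping.single 0 (Poly_Mapping.lookup p m) * monom_subst s m)"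
  unfolding psubst_monom_subst
  by (rule sum.mono_neutral_left) (use assms in \<open>auto simp: in_keys_iff\<close>)

lemma monom_subst_superset:
  assumes "finite V" "Poly_Mapping.keys m \<subseteq> V"
  shows "monom_subst s m = (\<Prod>v\<in>V. s v ^ Poly_Mapping.lookup m v)"
  unfolding monom_subst_def
  by (rule prod.mono_neutral_left) (use assms in \<open>auto simp: in_keys_iff\<close>)

lemma monom_subst_add: "monom_subst s (a + b) = monom_subst s a * monom_subst s b"
proof -
  let ?V = "Poly_Mapping.keys a \<union> Poly_Mapping.keys b"
  have "monom_subst s (a+b) = (\<Prod>v\<in>?V. s v ^ Poly_Mapping.lookup (a+b) v)"
    by (rule monom_subst_superset) (auto simp: keys_add)
  also have "\<dots> = (\<Prod>v\<in>?V. s v ^ Poly_Mapping.lookup a v) * (\<Prod>v\<in>?V. s v ^ Poly_Mapping.lookup b v)"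
    by (simp add: lookup_add power_add prod.distrib)
  also have "\<dots> = monom_subst s a * monom_subst s b"
    by (subst (1 2) monom_subst_superset[of ?V]) auto
  finally show ?thesis .
qed

lemma monom_subst_zero[simp]: "monom_subst s 0 = 1" by (simp add: monom_subst_def)

lemma psubst_zero[simp]: "psubst s 0 = 0" by (simp add: psubst_def)

lemma psubst_add: "psubst s (p + q) = psubst s p + psubst s q"
proof -
  let ?A = "Poly_Mapping.keys p \<union> Poly_Mapping.keys q"
  have "psubst s (p+q) = (\<Sum>m\<in>?A. Poly_Mapping.single 0 (Poly_Mapping.lookup (p+q) m) * monom_subst s m)"
    by (rule psubst_superset) (auto simp: keys_add)
  also have "\<dots> = (\<Sum>m\<in>?A. Poly_Mapping.single 0 (Poly_Mapping.lookup p m) * monom_subst s m)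
                 + (\<Sum>m\<in>?A. Poly_Mapping.single 0 (Poly_Mapping.lookup q m) * monom_subst s m)"
    by (simp add: lookup_add single_add distrib_right sum.distrib)
  also have "\<dots> = psubst s p + psubst s q"
    by (subst (1 2) psubst_superset[of ?A]) auto
  finally show ?thesis .
qed

lemma psubst_sum: "psubst s (\<Sum>i\<in>I. f i) = (\<Sum>i\<in>I. psubst s (f i))"
  by (induction I rule: infinite_finite_induct) (auto simp: psubst_add)

lemma psubst_single: "psubst s (Poly_Mapping.single m c) = Poly_Mapping.single 0 c * monom_subst s m"
proof (cases "c = 0")
  case True then show ?thesis by simp
next
  case False then show ?thesis by (simp add: psubst_monom_subst)
qed

lemma poly_mapping_expand: "p = (\<Sum>m\<in>Poly_Mapping.keys p. Poly_Mapping.single m (Poly_Mapping.lookup p m))"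
proof (rule poly_mapping_eqI)
  fix k
  have "Poly_Mapping.lookup (\<Sum>m\<in>Poly_Mapping.keys p. Poly_Mapping.single m (Poly_Mapping.lookup p m)) k
      = (\<Sum>m\<in>Poly_Mapping.keys p. if m = k then Poly_Mapping.lookup p m else 0)"
    by (simp add: lookup_sum lookup_single when_def)
  also have "\<dots> = Poly_Mapping.lookup p k"
    by (simp add: sum.delta in_keys_iff)
  finally show "Poly_Mapping.lookup p k = Poly_Mapping.lookup (\<Sum>m\<in>Poly_Mapping.keys p. Poly_Mapping.single m (Poly_Mapping.lookup p m)) k" by simp
qed

lemma psubst_mult: "psubst s (p * q) = psubst s p * psubst s q"
proof -
  have "p * q = (\<Sum>a\<in>Poly_Mapping.keys p. \<Sum>b\<in>Poly_Mapping.keys q.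
          Poly_Mapping.single (a+b) (Poly_Mapping.lookup p a * Poly_Mapping.lookup q b))"
  proof -
    have "p * q = (\<Sum>a\<in>Poly_Mapping.keys p. Poly_Mapping.single a (Poly_Mapping.lookup p a)) *
                  (\<Sum>b\<in>Poly_Mapping.keys q. Poly_Mapping.single b (Poly_Mapping.lookup q b))"
      by (metis poly_mapping_expand)
    then show ?thesis by (simp add: sum_distrib_left sum_distrib_right mult_single sum.swap[of _ "Poly_Mapping.keys q"])
  qed
  then have "psubst s (p*q) = (\<Sum>a\<in>Poly_Mapping.keys p. \<Sum>b\<in>Poly_Mapping.keys q.
          Poly_Mapping.single 0 (Poly_Mapping.lookup p a) * monom_subst s a * (Poly_Mapping.single 0 (Poly_Mapping.lookup q b) * monom_subst s b))"
  proof -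
    have e: "psubst s (Poly_Mapping.single (a+b) (x*y)) = Poly_Mapping.single 0 x * monom_subst s a * (Poly_Mapping.single 0 y * monom_subst s b)" for a b x y
    proof -
      have "Poly_Mapping.single (0::mono) (x*y) = Poly_Mapping.single 0 x * Poly_Mapping.single 0 y"
        by (simp add: mult_single)
      then show ?thesis by (simp add: psubst_single monom_subst_add mult_ac)
    qed
    show ?thesis using \<open>p * q = _\<close> by (simp only: psubst_sum e)
  qed
  also have "\<dots> = psubst s p * psubst s q"
    by (simp add: psubst_monom_subst sum_distrib_left sum_distrib_right sum.swap[of _ "Poly_Mapping.keys q"])
  finally show ?thesis .
qed

lemma psubst_one[simp]: "psubst s 1 = 1"
  by (simp add: psubst_monom_subst)

lemma psubst_const: "psubst s (Poly_Mapping.single 0 c) = Poly_Mapping.single 0 c"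
  by (simp add: psubst_single)

lemma psubst_pvar[simp]: "psubst s (pvar v) = s v"
  by (simp add: pvar_def psubst_single monom_subst_def)

lemma psubst_uminus: "psubst s (- p) = - psubst s p"
  using psubst_add[of s p "-p"] by (simp add: eq_neg_iff_add_eq_0 add.commute)

lemma psubst_diff: "psubst s (p - q) = psubst s p - psubst s q"
  using psubst_add[of s p "-q"] by (simp add: psubst_uminus)

lemma psubst_power: "psubst s (p ^ n) = psubst s p ^ n"
  by (induction n) (auto simp: psubst_mult)

lemma psubst_prod: "psubst s (\<Prod>i\<in>I. f i) = (\<Prod>i\<in>I. psubst s (f i))"
  by (induction I rule: infinite_finite_induct) (auto simp: psubst_mult)

lemma psubst_monom_subst_comp: "psubst s (monom_subst s' m) = monom_subst (\<lambda>v. psubst s (s' v)) m"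
  by (simp add: monom_subst_def psubst_prod psubst_power)

lemma psubst_comp: "psubst s (psubst s' p) = psubst (\<lambda>v. psubst s (s' v)) p"
proof -
  have "psubst s (psubst s' p) = psubst s (\<Sum>m\<in>Poly_Mapping.keys p. Poly_Mapping.single 0 (Poly_Mapping.lookup p m) * monom_subst s' m)"
    by (simp only: psubst_monom_subst[of s' p])
  also have "\<dots> = (\<Sum>m\<in>Poly_Mapping.keys p. Poly_Mapping.single 0 (Poly_Mapping.lookup p m) * monom_subst (\<lambda>v. psubst s (s' v)) m)"
    by (simp only: psubst_sum psubst_mult psubst_const psubst_monom_subst_comp)
  also have "\<dots> = psubst (\<lambda>v. psubst s (s' v)) p"
    by (simp only: psubst_monom_subst[of "\<lambda>v. psubst s (s' v)" p])
  finally show ?thesis .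
qed

lemma prod_single: "(\<Prod>v\<in>V. Poly_Mapping.single (g v) (1::complex)) = Poly_Mapping.single (\<Sum>v\<in>V. g v) 1"
  by (induction V rule: infinite_finite_induct) (auto simp: mult_single)

lemma monom_subst_pvar: "monom_subst pvar m = Poly_Mapping.single m 1"
proof -
  have "monom_subst pvar m = (\<Prod>v\<in>Poly_Mapping.keys m. Poly_Mapping.single (Poly_Mapping.single v (Poly_Mapping.lookup m v)) 1)"
  proof -
    have "pvar v ^ n = Poly_Mapping.single (Poly_Mapping.single v n) 1" for v n
      by (induction n) (auto simp: pvar_def mult_single single_add[symmetric] add.commute)
    then show ?thesis by (simp add: monom_subst_def)
  qed
  also have "\<dots> = Poly_Mapping.single (\<Sum>v\<in>Poly_Mapping.keys m. Poly_Mapping.single v (Poly_Mapping.lookup m v)) 1"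
    by (rule prod_single)
  also have "\<dots> = Poly_Mapping.single m 1"
    by (simp flip: poly_mapping_expand)
  finally show ?thesis .
qed

lemma psubst_id: "psubst pvar p = p"
  by (simp add: psubst_monom_subst monom_subst_pvar mult_single flip: poly_mapping_expand)

definition faithful :: "(nat \<Rightarrow> mpoly) \<Rightarrow> bool" where
  "faithful s \<longleftrightarrow> (\<forall>p. psubst s p = 0 \<longrightarrow> p = 0)"

lemma faithful_nonzero: "faithful s \<Longrightarrow> b \<noteq> 0 \<Longrightarrow> psubst s b \<noteq> 0"
  unfolding faithful_def by blast

lemma rsubst_Fract:
  assumes g: "faithful s" and b: "b \<noteq> 0"
  shows "rsubst s (Fract a b) = Fract (psubst s a) (psubst s b)"
proof -
  define r where "r = (SOME r. snd r \<noteq> 0 \<and> Fract a b = Fract (fst r) (snd r))"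
  have "\<exists>r. snd r \<noteq> 0 \<and> Fract a b = Fract (fst r) (snd r)"
    using b by (intro exI[of _ "(a,b)"]) auto
  then have r: "snd r \<noteq> 0" "Fract a b = Fract (fst r) (snd r)"
    unfolding r_def by (metis (mono_tags, lifting) someI_ex)+
  then have e: "a * snd r = fst r * b" using b by (simp add: eq_fract)
  have "psubst s a * psubst s (snd r) = psubst s (fst r) * psubst s b"
    using arg_cong[OF e, of "psubst s"] by (simp add: psubst_mult)
  then have "Fract (psubst s (fst r)) (psubst s (snd r)) = Fract (psubst s a) (psubst s b)"
    using faithful_nonzero[OF g b] faithful_nonzero[OF g r(1)] by (simp add: eq_fract)
  then show ?thesis unfolding rsubst_def r_def[symmetric] Let_def by simp
qed

definition field_hom :: "('a::field \<Rightarrow> 'b::field) \<Rightarrow> bool" where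
  "field_hom \<phi> \<longleftrightarrow> (\<forall>x y. \<phi> (x + y) = \<phi> x + \<phi> y) \<and> (\<forall>x y. \<phi> (x * y) = \<phi> x * \<phi> y) \<and> \<phi> 1 = 1"

lemma rsubst_field_hom:
  assumes g: "faithful s" shows "field_hom (rsubst s)"
  unfolding field_hom_def
proof (intro conjI allI)
  fix x y :: ratf
  show "rsubst s (x + y) = rsubst s x + rsubst s y"
  proof (cases x, cases y)
    fix a b c d assume x: "x = Fract a b" "b \<noteq> 0" and y: "y = Fract c d" "d \<noteq> 0"
    then show ?thesis using faithful_nonzero[OF g] by (simp add: rsubst_Fract[OF g] psubst_add psubst_mult)
  qed
  show "rsubst s (x * y) = rsubst s x * rsubst s y"
  proof (cases x, cases y)
    fix a b c d assume x: "x = Fract a b" "b \<noteq> 0" and y: "y = Fract c d" "d \<noteq> 0"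
    then show ?thesis using faithful_nonzero[OF g] by (simp add: rsubst_Fract[OF g] psubst_mult)
  qed
next
  show "rsubst s 1 = 1" by (simp add: One_fract_def rsubst_Fract[OF g])
qed

lemma field_hom_add: "field_hom \<phi> \<Longrightarrow> \<phi> (x + y) = \<phi> x + \<phi> y" by (simp add: field_hom_def)
lemma field_hom_mult: "field_hom \<phi> \<Longrightarrow> \<phi> (x * y) = \<phi> x * \<phi> y" by (simp add: field_hom_def)
lemma field_hom_one: "field_hom \<phi> \<Longrightarrow> \<phi> 1 = 1" by (simp add: field_hom_def)
lemma field_hom_zero: "field_hom \<phi> \<Longrightarrow> \<phi> 0 = 0"
proof -
  assume h: "field_hom \<phi>"
  have "\<phi> 0 + \<phi> 0 = \<phi> 0 + 0" using field_hom_add[OF h, of 0 0] by simp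
  then show ?thesis by (rule add_left_imp_eq)
qed
lemma field_hom_uminus: "field_hom \<phi> \<Longrightarrow> \<phi> (- x) = - \<phi> x"
  using field_hom_add[of \<phi> x "-x"] field_hom_zero[of \<phi>] by (simp add: eq_neg_iff_add_eq_0 add.commute)
lemma field_hom_diff: "field_hom \<phi> \<Longrightarrow> \<phi> (x - y) = \<phi> x - \<phi> y"
  using field_hom_add[of \<phi> x "-y"] field_hom_uminus[of \<phi> y] by simp
lemma field_hom_inverse: "field_hom \<phi> \<Longrightarrow> \<phi> (inverse x) = inverse (\<phi> x)"
proof (cases "x = 0")
  case True then show "field_hom \<phi> \<Longrightarrow> ?thesis" by (simp add: field_hom_zero)
next
  case False
  assume h: "field_hom \<phi>"
  have "\<phi> x * \<phi> (inverse x) = 1" using False field_hom_mult[OF h, of x "inverse x"] field_hom_one[OF h] by simp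
  then show ?thesis by (metis inverse_unique)
qed
lemma field_hom_divide: "field_hom \<phi> \<Longrightarrow> \<phi> (x / y) = \<phi> x / \<phi> y"
  by (simp add: divide_inverse field_hom_mult field_hom_inverse)
lemma field_hom_sum: "field_hom \<phi> \<Longrightarrow> \<phi> (\<Sum>i\<in>I. f i) = (\<Sum>i\<in>I. \<phi> (f i))"
  by (induction I rule: infinite_finite_induct) (auto simp: field_hom_zero field_hom_add)
lemma field_hom_prod: "field_hom \<phi> \<Longrightarrow> \<phi> (\<Prod>i\<in>I. f i) = (\<Prod>i\<in>I. \<phi> (f i))"
  by (induction I rule: infinite_finite_induct) (auto simp: field_hom_one field_hom_mult)
lemma field_hom_power: "field_hom \<phi> \<Longrightarrow> \<phi> (x ^ n) = \<phi> x ^ n"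
  by (induction n) (auto simp: field_hom_one field_hom_mult)
lemma field_hom_of_nat: "field_hom \<phi> \<Longrightarrow> \<phi> (of_nat n) = of_nat n"
  by (induction n) (auto simp: field_hom_zero field_hom_one field_hom_add)

lemma faithful_comp: "faithful s \<Longrightarrow> faithful s' \<Longrightarrow> faithful (\<lambda>v. psubst s (s' v))"
  unfolding faithful_def by (metis psubst_comp)

lemma rsubst_comp:
  assumes "faithful s" "faithful s'"
  shows "rsubst s (rsubst s' q) = rsubst (\<lambda>v. psubst s (s' v)) q"
proof (cases q)
  fix a b assume "q = Fract a b" "b \<noteq> 0"
  then show ?thesis using assms faithful_nonzero[OF assms(2)]
    by (simp add: rsubst_Fract faithful_comp psubst_comp)
qed

lemma rsubst_rvar: "faithful s \<Longrightarrow> rsubst s (rvar v) = Fract (s v) 1"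
  by (simp add: rvar_def rsubst_Fract)

lemma rsubst_cst: "faithful s \<Longrightarrow> rsubst s (cst z) = cst z"
  by (simp add: cst_def rsubst_Fract psubst_const)

definition affine_wmap :: "(nat \<Rightarrow> nat) \<Rightarrow> (nat \<Rightarrow> int) \<Rightarrow> nat \<Rightarrow> mpoly" where
  "affine_wmap \<tau> \<nu> i = pvar (widx (\<tau> i)) + of_int (\<nu> i) * pvar 0"

definition affine_subst :: "(nat \<Rightarrow> nat) \<Rightarrow> (nat \<Rightarrow> int) \<Rightarrow> ratf \<Rightarrow> ratf" where
  "affine_subst \<tau> \<nu> = wsubst (affine_wmap \<tau> \<nu>)"

lemma wmap_widx[simp]: "wmap h (widx i) = h i"
  by (simp add: wmap_def widx_def)

lemma wmap_nonw: "\<not> (3 \<le> v \<and> odd v) \<Longrightarrow> wmap h v = pvar v"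
  unfolding wmap_def by auto

lemma of_int_fract: "(of_int k :: 'a::idom fract) = Fract (of_int k) 1"
proof (cases "k \<ge> 0")
  case True then show ?thesis by (metis of_int_of_nat_eq of_nat_fract nonneg_int_cases)
next
  case False
  then obtain n where "k = - int n" by (metis linorder_le_less_linear neg_int_cases order_less_imp_le)
  then show ?thesis by (simp add: of_nat_fract)
qed

lemma psubst_of_int: "psubst s (of_int k * p) = of_int k * psubst s p"
  by (simp add: psubst_mult psubst_const flip: single_of_int)
lemma psubst_of_int': "psubst s (p * of_int k) = psubst s p * of_int k"
  by (simp add: psubst_mult psubst_const flip: single_of_int)

lemma wmap_affine_wmap_comp:
  "(\<lambda>v. psubst (wmap (affine_wmap \<tau>1 \<nu>1)) (wmap (affine_wmap \<tau>2 \<nu>2) v)) = wmap (affine_wmap (\<tau>1 \<circ> \<tau>2) (\<lambda>i. \<nu>1 (\<tau>2 i) + \<nu>2 i))"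
proof
  fix v
  show "psubst (wmap (affine_wmap \<tau>1 \<nu>1)) (wmap (affine_wmap \<tau>2 \<nu>2) v) = wmap (affine_wmap (\<tau>1 \<circ> \<tau>2) (\<lambda>i. \<nu>1 (\<tau>2 i) + \<nu>2 i)) v"
  proof (cases "3 \<le> v \<and> odd v")
    case True
    define i where "i = (v - 3) div 2"
    have v: "v = widx i" unfolding widx_def i_def using True by presburger
    have "wmap (affine_wmap \<tau>1 \<nu>1) 0 = pvar 0" by (simp add: wmap_def)
    then show ?thesis unfolding v
      by (simp add: affine_wmap_def psubst_add psubst_of_int) (simp add: algebra_simps)
  next
    case False
    then show ?thesis by (simp add: wmap_nonw)
  qed
qed

lemma wmap_affine_wmap_id: "wmap (affine_wmap id (\<lambda>_. 0)) = pvar"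
proof
  fix v show "wmap (affine_wmap id (\<lambda>_. 0)) v = pvar v"
  proof (cases "3 \<le> v \<and> odd v")
    case True
    define i where "i = (v - 3) div 2"
    have v: "v = widx i" unfolding widx_def i_def using True by presburger
    show ?thesis unfolding v by (simp add: affine_wmap_def)
  qed (simp add: wmap_nonw)
qed

lemma faithful_affine_wmap: assumes "bij \<tau>" shows "faithful (wmap (affine_wmap \<tau> \<nu>))"
proof -
  define \<tau>' where "\<tau>' = inv \<tau>"
  define \<nu>' where "\<nu>' = (\<lambda>i. - \<nu> (\<tau>' i))"
  have e: "affine_wmap (\<tau>' \<circ> \<tau>) (\<lambda>i. \<nu>' (\<tau> i) + \<nu> i) = affine_wmap id (\<lambda>_. 0)"
    using assms by (simp add: \<tau>'_def \<nu>'_def bij_is_inj inv_f_f fun_eq_iff affine_wmap_def)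
  have "(\<lambda>v. psubst (wmap (affine_wmap \<tau>' \<nu>')) (wmap (affine_wmap \<tau> \<nu>) v)) = pvar"
    unfolding wmap_affine_wmap_comp e wmap_affine_wmap_id ..
  then have "psubst (wmap (affine_wmap \<tau>' \<nu>')) (psubst (wmap (affine_wmap \<tau> \<nu>)) p) = p" for p
    by (simp add: psubst_comp psubst_id)
  then show ?thesis unfolding faithful_def by (metis psubst_zero)
qed

lemma affine_subst_field_hom: "bij \<tau> \<Longrightarrow> field_hom (affine_subst \<tau> \<nu>)"
  unfolding affine_subst_def wsubst_def by (rule rsubst_field_hom[OF faithful_affine_wmap])

lemma affine_subst_comp: "bij \<tau>1 \<Longrightarrow> bij \<tau>2 \<Longrightarrow> affine_subst \<tau>1 \<nu>1 (affine_subst \<tau>2 \<nu>2 f) = affine_subst (\<tau>1 \<circ> \<tau>2) (\<lambda>i. \<nu>1 (\<tau>2 i) + \<nu>2 i) f"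
  unfolding affine_subst_def wsubst_def by (simp add: rsubst_comp faithful_affine_wmap wmap_affine_wmap_comp)

lemma affine_subst_id: "affine_subst id (\<lambda>_. 0) f = f"
proof (cases f)
  fix a b assume "f = Fract a b" "b \<noteq> 0"
  then show ?thesis unfolding affine_subst_def wsubst_def wmap_affine_wmap_id
    by (simp add: rsubst_Fract faithful_def psubst_id)
qed

lemma affine_subst_wv: "bij \<tau> \<Longrightarrow> affine_subst \<tau> \<nu> (wv i) = wv (\<tau> i) + of_int (\<nu> i) * hb"
  unfolding affine_subst_def wsubst_def wv_def
  by (simp add: faithful_affine_wmap rsubst_Fract affine_wmap_def hb_def rvar_def of_int_fract)

lemma affine_subst_rvar_nonw: "bij \<tau> \<Longrightarrow> \<not> (3 \<le> v \<and> odd v) \<Longrightarrow> affine_subst \<tau> \<nu> (rvar v) = rvar v"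
proof -
  assume a: "bij \<tau>" "\<not> (3 \<le> v \<and> odd v)"
  have "wmap (affine_wmap \<tau> \<nu>) v = pvar v" by (rule wmap_nonw) (use a in auto)
  then show ?thesis unfolding affine_subst_def wsubst_def using a by (simp add: rsubst_rvar faithful_affine_wmap) (simp add: rvar_def)
qed

lemma affine_subst_hb[simp]: "bij \<tau> \<Longrightarrow> affine_subst \<tau> \<nu> hb = hb"
  unfolding hb_def by (rule affine_subst_rvar_nonw) auto
lemma affine_subst_tt[simp]: "bij \<tau> \<Longrightarrow> affine_subst \<tau> \<nu> tt = tt"
  unfolding tt_def by (rule affine_subst_rvar_nonw) auto
lemma affine_subst_cv[simp]: "bij \<tau> \<Longrightarrow> affine_subst \<tau> \<nu> (cv m) = cv m"
  unfolding cv_def cidx_def by (rule affine_subst_rvar_nonw) auto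
lemma affine_subst_cst[simp]: "bij \<tau> \<Longrightarrow> affine_subst \<tau> \<nu> (cst z) = cst z"
  unfolding affine_subst_def wsubst_def by (simp add: rsubst_cst faithful_affine_wmap)

lemma permv_affine_subst: "permv \<sigma> = affine_subst \<sigma> (\<lambda>_. 0)"
  unfolding permv_def affine_subst_def affine_wmap_def by simp

lemma shift_affine_subst: "shift lam = affine_subst id lam"
  unfolding shift_def affine_subst_def affine_wmap_def by simp

lemma shift_permv: "bij \<sigma> \<Longrightarrow> shift lam (permv \<sigma> f) = affine_subst \<sigma> (\<lambda>i. lam (\<sigma> i)) f"
  by (simp add: shift_affine_subst permv_affine_subst affine_subst_comp)

lemma sw_affine_subst: "sw k = affine_subst (Transposition.transpose k (Suc k)) (\<lambda>_. 0)"
  unfolding sw_def permv_affine_subst ..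

text \<open>Dedekind's lemma; it makes the coefficients of an expansion, and hence Res, unique.\<close>
lemma field_homs_linear_independent:
  assumes "finite P" "\<forall>p\<in>P. field_hom (\<phi> p)" "inj_on \<phi> P" "\<forall>x. (\<Sum>p\<in>P. c p * \<phi> p x) = 0" "p \<in> P"
  shows "c p = 0"
  using assms
proof (induction P arbitrary: c p rule: finite_induct)
  case empty then show ?case by simp
next
  case (insert q P)
  have hq: "field_hom (\<phi> q)" using insert by auto
  have rel: "(\<Sum>p\<in>P. c p * \<phi> p x) = - (c q * \<phi> q x)" for x
    using insert.prems(3)[rule_format, of x] insert.hyps by (simp add: eq_neg_iff_add_eq_0 add.commute)
  have zero: "c p * (\<phi> p y - \<phi> q y) = 0" if "p \<in> P" for p y
  proof (rule insert.IH[of "\<lambda>p. c p * (\<phi> p y - \<phi> q y)"])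
    show "\<forall>p\<in>P. field_hom (\<phi> p)" "inj_on \<phi> P" using insert.prems by (auto intro: inj_on_subset)
    show "p \<in> P" by fact
    show "\<forall>x. (\<Sum>p\<in>P. c p * (\<phi> p y - \<phi> q y) * \<phi> p x) = 0"
    proof
      fix x
      have "(\<Sum>p\<in>P. c p * (\<phi> p y - \<phi> q y) * \<phi> p x)
          = (\<Sum>p\<in>P. c p * \<phi> p (y * x)) - \<phi> q y * (\<Sum>p\<in>P. c p * \<phi> p x)"
        using insert.prems(1) by (simp add: algebra_simps sum_subtractf sum_distrib_left field_hom_mult)
      also have "\<dots> = 0" unfolding rel using hq by (simp add: field_hom_mult algebra_simps)
      finally show "(\<Sum>p\<in>P. c p * (\<phi> p y - \<phi> q y) * \<phi> p x) = 0" .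
    qed
  qed
  have cP: "c p = 0" if "p \<in> P" for p
  proof -
    have "\<phi> p \<noteq> \<phi> q"
    proof
      assume "\<phi> p = \<phi> q"
      then have "p = q" using inj_onD[OF insert.prems(2)] that by auto
      then show False using insert.hyps that by auto
    qed
    then obtain y where "\<phi> p y \<noteq> \<phi> q y" by auto
    then show ?thesis using zero[OF that, of y] by simp
  qed
  have "c q = 0" using rel[of 1] cP hq insert.prems(1) by (simp add: field_hom_one)
  then show ?case using insert.prems(4) cP by auto
qed

definition of_poly :: "mpoly \<Rightarrow> ratf" where "of_poly p = Fract p 1"

lemma of_poly_add: "of_poly (p + q) = of_poly p + of_poly q" by (simp add: of_poly_def)
lemma of_poly_mult: "of_poly (p * q) = of_poly p * of_poly q" by (simp add: of_poly_def)
lemma of_poly_diff: "of_poly (p - q) = of_poly p - of_poly q" by (simp add: of_poly_def)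
lemma of_poly_uminus: "of_poly (- p) = - of_poly p" by (simp add: of_poly_def)
lemma of_poly_0: "of_poly 0 = 0" by (simp add: of_poly_def Zero_fract_def)
lemma of_poly_eq_0_iff: "of_poly p = 0 \<longleftrightarrow> p = 0" by (simp add: of_poly_def Zero_fract_def eq_fract)
lemma of_poly_of_int: "of_poly (of_int k) = of_int k" by (simp add: of_poly_def of_int_fract)
lemma of_poly_of_nat: "of_poly (of_nat k) = of_nat k" by (simp add: of_poly_def of_nat_fract)

lemma wv_of_poly: "wv i = of_poly (pvar (widx i))" by (simp add: wv_def rvar_def of_poly_def)
lemma hb_of_poly: "hb = of_poly (pvar 0)" by (simp add: hb_def rvar_def of_poly_def)
lemma tt_of_poly: "tt = of_poly (pvar 1)" by (simp add: tt_def rvar_def of_poly_def)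
lemma cv_of_poly: "cv m = of_poly (pvar (cidx m))" by (simp add: cv_def rvar_def of_poly_def)
lemma cst_of_poly: "cst z = of_poly (Poly_Mapping.single 0 z)" by (simp add: cst_def of_poly_def)

lemmas of_poly_simps = of_poly_add[symmetric] of_poly_mult[symmetric] of_poly_diff[symmetric] of_poly_uminus[symmetric]
  of_poly_of_int[symmetric] of_poly_of_nat[symmetric] wv_of_poly hb_of_poly tt_of_poly cv_of_poly cst_of_poly

definition peval :: "(nat \<Rightarrow> complex) \<Rightarrow> mpoly \<Rightarrow> mpoly" where
  "peval x = psubst (\<lambda>v. Poly_Mapping.single 0 (x v))"

lemma const_add: "Poly_Mapping.single 0 a + Poly_Mapping.single 0 b = (Poly_Mapping.single 0 (a + b) :: mpoly)"
  by (simp add: single_add)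
lemma const_diff: "Poly_Mapping.single 0 a - Poly_Mapping.single 0 b = (Poly_Mapping.single 0 (a - b) :: mpoly)"
  by (simp add: single_diff)

lemma peval_pvar: "peval x (pvar v) = Poly_Mapping.single 0 (x v)" by (simp add: peval_def)

lemma peval_nonzero: "peval x p \<noteq> 0 \<Longrightarrow> p \<noteq> 0"
  by (auto simp: peval_def)

lemma widx_inj[simp]: "widx a = widx b \<longleftrightarrow> a = b" by (simp add: widx_def)
lemma widx_ne0[simp]: "widx a \<noteq> 0" "widx a \<noteq> 1" by (simp_all add: widx_def)

lemma wv_plus_hb_inj:
  assumes "wv a + of_int x * hb = wv b + of_int y * hb"
  shows "a = b \<and> x = y"
proof -
  let ?P = "pvar (widx a) + of_int x * pvar 0 - (pvar (widx b) + of_int y * pvar 0)"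
  have "of_poly ?P = 0" using assms by (simp add: of_poly_simps[symmetric] of_poly_diff of_poly_add of_poly_mult)
  then have P0: "?P = 0" by (simp add: of_poly_eq_0_iff)
  show ?thesis
  proof (rule ccontr)
    assume "\<not> (a = b \<and> x = y)"
    then consider "a \<noteq> b" | "a = b" "x \<noteq> y" by blast
    then show False
    proof cases
      case 1
      have "peval (\<lambda>v. if v = widx a then 1 else 0) ?P \<noteq> 0"
        using 1 by (simp add: peval_def psubst_add psubst_diff psubst_of_int const_add const_diff mult_single)
      then show False using P0 peval_nonzero by blast
    next
      case 2
      have "peval (\<lambda>v. if v = 0 then 1 else 0) ?P \<noteq> 0"
        using 2 by (simp add: peval_def psubst_add psubst_diff psubst_of_int const_add const_diff mult_single)
      then show False using P0 peval_nonzero by blast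
    qed
  qed
qed

section \<open>Expansions in the operators u^lam sigma\<close>

text \<open>A pair (lam, sigma) encodes the difference operator u^lam sigma.\<close>
type_synonym shift_perm = "(nat \<Rightarrow> int) \<times> (nat \<Rightarrow> nat)"

definition admissible :: "nat \<Rightarrow> shift_perm \<Rightarrow> bool" where
  "admissible N p \<longleftrightarrow> fst p \<in> wts N \<and> snd p permutes {1..N}"

definition term_op :: "shift_perm \<Rightarrow> ratf \<Rightarrow> ratf" where
  "term_op p f = shift (fst p) (permv (snd p) f)"

lemma term_op_affine_subst: "snd p permutes S \<Longrightarrow> term_op p = affine_subst (snd p) (\<lambda>i. fst p (snd p i))"
  by (auto simp: term_op_def fun_eq_iff shift_permv permutes_bij)

lemma term_op_field_hom: "snd p permutes S \<Longrightarrow> field_hom (term_op p)"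
  by (simp add: term_op_affine_subst affine_subst_field_hom permutes_bij)

lemma term_op_wv: "snd p permutes S \<Longrightarrow> term_op p (wv i) = wv (snd p i) + of_int (fst p (snd p i)) * hb"
  by (simp add: term_op_affine_subst affine_subst_wv permutes_bij)

lemma term_op_inj: assumes "admissible N p" "admissible N q" "term_op p = term_op q" shows "p = q"
proof -
  obtain lam \<sigma> lam' \<sigma>' where p: "p = (lam, \<sigma>)" and q: "q = (lam', \<sigma>')" by fastforce
  have perm: "\<sigma> permutes {1..N}" "\<sigma>' permutes {1..N}" using assms p q by (auto simp: admissible_def)
  have w: "wv (\<sigma> i) + of_int (lam (\<sigma> i)) * hb = wv (\<sigma>' i) + of_int (lam' (\<sigma>' i)) * hb" for i
    using arg_cong[OF assms(3), of "\<lambda>F. F (wv i)"] term_op_wv[of p, OF perm(1)[folded snd_conv[of lam \<sigma>, folded p]]]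
      term_op_wv[of q, OF perm(2)[folded snd_conv[of lam' \<sigma>', folded q]]] p q by simp
  have s: "\<sigma> = \<sigma>'" using wv_plus_hb_inj[OF w] by auto
  have "lam j = lam' j" for j
  proof -
    obtain i where "\<sigma> i = j" using perm(1) by (metis permutes_surj surj_def)
    then show ?thesis using wv_plus_hb_inj[OF w[of i]] s by auto
  qed
  then show ?thesis using p q s by auto
qed

lemma expansion_sum: assumes "expansion N A g" "finite F" "{p. g p \<noteq> 0} \<subseteq> F"
  shows "A f = (\<Sum>p\<in>F. g p * term_op p f)"
proof -
  have "A f = (\<Sum>p\<in>{p. g p \<noteq> 0}. g p * term_op p f)" using assms(1) by (simp add: expansion_def term_op_def)
  also have "\<dots> = (\<Sum>p\<in>F. g p * term_op p f)" by (rule sum.mono_neutral_left) (use assms in auto)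
  finally show ?thesis .
qed

lemma expansionI:
  assumes "finite F" "\<And>p. g p \<noteq> 0 \<Longrightarrow> p \<in> F \<and> admissible N p" "\<And>f. A f = (\<Sum>p\<in>F. g p * term_op p f)"
  shows "expansion N A g"
  unfolding expansion_def
proof (intro conjI allI impI)
  show "finite {p. g p \<noteq> 0}" using assms(1,2) by (metis (mono_tags) mem_Collect_eq rev_finite_subset subsetI)
  fix lam \<sigma> assume "g (lam, \<sigma>) \<noteq> 0"
  then show "lam \<in> wts N" "\<sigma> permutes {1..N}" using assms(2) by (auto simp: admissible_def)
next
  fix f
  have "A f = (\<Sum>p\<in>F. g p * term_op p f)" by fact
  also have "\<dots> = (\<Sum>p\<in>{p. g p \<noteq> 0}. g p * term_op p f)"
    by (rule sum.mono_neutral_right) (use assms in auto)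
  finally show "A f = (\<Sum>p\<in>{p. g p \<noteq> 0}. g p * shift (fst p) (permv (snd p) f))" by (simp add: term_op_def)
qed

lemma expansion_admissible: "expansion N A g \<Longrightarrow> g p \<noteq> 0 \<Longrightarrow> admissible N p"
  by (cases p) (auto simp: expansion_def admissible_def)

lemma expansion_finite: "expansion N A g \<Longrightarrow> finite {p. g p \<noteq> 0}"
  by (simp add: expansion_def)

lemma expansion_unique: assumes "expansion N A g" "expansion N A g'" shows "g = g'"
proof
  fix p
  let ?S = "{p. g p \<noteq> 0} \<union> {p. g' p \<noteq> 0}"
  have fin: "finite ?S" using assms expansion_finite by blast
  have rel: "\<forall>f. (\<Sum>q\<in>?S. (g q - g' q) * term_op q f) = 0"
  proof
    fix f
    have "A f = (\<Sum>q\<in>?S. g q * term_op q f)" "A f = (\<Sum>q\<in>?S. g' q * term_op q f)"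
      using expansion_sum[OF assms(1) fin] expansion_sum[OF assms(2) fin] by auto
    then show "(\<Sum>q\<in>?S. (g q - g' q) * term_op q f) = 0" by (simp add: algebra_simps sum_subtractf)
  qed
  have dmS: "\<forall>q\<in>?S. admissible N q" using expansion_admissible assms by blast
  show "g p = g' p"
  proof (cases "p \<in> ?S")
    case True
    have "g p - g' p = 0"
    proof (rule field_homs_linear_independent[OF fin _ _ rel True])
      show "\<forall>q\<in>?S. field_hom (term_op q)" using dmS term_op_field_hom by (auto simp: admissible_def)
      show "inj_on term_op ?S" using dmS term_op_inj by (meson inj_onI)
    qed
    then show ?thesis by simp
  qed auto
qed

lemma Res_eq: assumes "expansion N A g" shows "Res N A = Res_of N g"
  unfolding Res_def
proof (rule the_equality)
  show "\<exists>g'. expansion N A g' \<and> Res_of N g = Res_of N g'" using assms by blast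
  fix D assume "\<exists>g'. expansion N A g' \<and> D = Res_of N g'"
  then show "D = Res_of N g" using expansion_unique[OF assms] by blast
qed

lemma Res_of_alt: assumes "expansion N A g"
  shows "Res_of N g lam = (\<Sum>p\<in>{p. g p \<noteq> 0 \<and> fst p = lam}. g p)"
proof -
  have fin: "finite {p. g p \<noteq> 0 \<and> fst p = lam}" using expansion_finite[OF assms] by (rule rev_finite_subset) auto
  have "Res_of N g lam = (\<Sum>\<sigma>\<in>{\<sigma>. \<sigma> permutes {1..N}}. g (lam, \<sigma>))" by (simp add: Res_of_def)
  also have "\<dots> = (\<Sum>\<sigma>\<in>snd ` {p. g p \<noteq> 0 \<and> fst p = lam}. g (lam, \<sigma>))"
    by (rule sum.mono_neutral_right)
       (use expansion_admissible[OF assms] finite_permutations in \<open>auto simp: admissible_def image_iff\<close>)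
  also have "\<dots> = (\<Sum>p\<in>{p. g p \<noteq> 0 \<and> fst p = lam}. g p)"
    by (subst sum.reindex) (auto simp: inj_on_def intro!: sum.cong)
  finally show ?thesis .
qed

lemma Res_alt: "expansion N A g \<Longrightarrow> Res N A lam = (\<Sum>p\<in>{p. g p \<noteq> 0 \<and> fst p = lam}. g p)"
  by (simp add: Res_eq Res_of_alt)

definition term_mult :: "shift_perm \<Rightarrow> shift_perm \<Rightarrow> shift_perm" where
  "term_mult p q = ((\<lambda>i. fst p i + fst q (inv (snd p) i)), snd p \<circ> snd q)"

lemma term_op_term_mult: assumes "admissible N p" "admissible N q" shows "term_op p (term_op q f) = term_op (term_mult p q) f"
proof -
  have b: "bij (snd p)" "bij (snd q)" using assms by (auto simp: admissible_def permutes_bij)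
  have m: "snd (term_mult p q) permutes {1..N}" using assms by (auto simp: admissible_def term_mult_def permutes_compose)
  have e: "term_op (term_mult p q) = affine_subst (snd (term_mult p q)) (\<lambda>i. fst (term_mult p q) (snd (term_mult p q) i))" by (rule term_op_affine_subst[OF m])
  show ?thesis unfolding e
    using assms b by (simp add: term_op_affine_subst[of p "{1..N}"] term_op_affine_subst[of q "{1..N}"] admissible_def affine_subst_comp
       term_mult_def bij_is_inj inv_f_f o_def)
qed

lemma admissible_term_mult: assumes "admissible N p" "admissible N q" shows "admissible N (term_mult p q)"
proof -
  have "inv (snd p) i = i" if "i \<notin> {1..N}" for i
    using assms that by (metis admissible_def permutes_inv permutes_not_in)
  then show ?thesis using assms
    by (auto simp: admissible_def term_mult_def wts_def permutes_compose)
qed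

definition term_conv :: "(shift_perm \<Rightarrow> ratf) \<Rightarrow> (shift_perm \<Rightarrow> ratf) \<Rightarrow> shift_perm \<Rightarrow> ratf" where
  "term_conv g h r = (\<Sum>pq\<in>{pq\<in>{p. g p \<noteq> 0} \<times> {q. h q \<noteq> 0}. term_mult (fst pq) (snd pq) = r}.
       g (fst pq) * term_op (fst pq) (h (snd pq)))"

lemma expansion_comp:
  assumes A: "expansion N A g" and B: "expansion N B h"
  shows "expansion N (A \<circ> B) (term_conv g h)"
proof -
  let ?S = "{p. g p \<noteq> 0} \<times> {q. h q \<noteq> 0}"
  let ?m = "\<lambda>pq. term_mult (fst pq) (snd pq)"
  let ?X = "\<lambda>pq. g (fst pq) * term_op (fst pq) (h (snd pq))"
  have finS: "finite ?S" using expansion_finite[OF A] expansion_finite[OF B] by auto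
  let ?F = "?m ` ?S"
  have finF: "finite ?F" using finS by auto
  show ?thesis
  proof (rule expansionI[OF finF])
    fix r assume "term_conv g h r \<noteq> 0"
    have "{pq\<in>?S. ?m pq = r} \<noteq> {}"
    proof
      assume e: "{pq\<in>?S. ?m pq = r} = {}"
      have "term_conv g h r = 0" unfolding term_conv_def e by simp
      then show False using \<open>term_conv g h r \<noteq> 0\<close> by simp
    qed
    then obtain pq where "pq \<in> ?S" "?m pq = r" by blast
    then show "r \<in> ?F \<and> admissible N r" using expansion_admissible[OF A] expansion_admissible[OF B] admissible_term_mult by force
  next
    fix f
    have "(A \<circ> B) f = (\<Sum>p\<in>{p. g p \<noteq> 0}. g p * term_op p (\<Sum>q\<in>{q. h q \<noteq> 0}. h q * term_op q f))"
      using expansion_sum[OF A expansion_finite[OF A]] expansion_sum[OF B expansion_finite[OF B]] by simp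
    also have "\<dots> = (\<Sum>p\<in>{p. g p \<noteq> 0}. \<Sum>q\<in>{q. h q \<noteq> 0}. ?X (p,q) * term_op (?m (p,q)) f)"
    proof (rule sum.cong[OF refl])
      fix p assume p: "p \<in> {p. g p \<noteq> 0}"
      then have hp2: "admissible N p" using expansion_admissible[OF A] by auto
      then have hp: "field_hom (term_op p)" "admissible N p" using term_op_field_hom[of p "{1..N}"] by (auto simp: admissible_def)
      show "g p * term_op p (\<Sum>q\<in>{q. h q \<noteq> 0}. h q * term_op q f) = (\<Sum>q\<in>{q. h q \<noteq> 0}. ?X (p,q) * term_op (?m (p,q)) f)"
        using hp expansion_admissible[OF B] by (simp add: field_hom_sum field_hom_mult sum_distrib_left term_op_term_mult mult.assoc)
    qed
    also have "\<dots> = (\<Sum>pq\<in>?S. ?X pq * term_op (?m pq) f)"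
      by (simp add: sum.cartesian_product split_beta)
    also have "\<dots> = (\<Sum>r\<in>?F. \<Sum>pq\<in>{pq\<in>?S. ?m pq = r}. ?X pq * term_op (?m pq) f)"
      by (rule sum.group[symmetric, OF finS finF]) auto
    also have "\<dots> = (\<Sum>r\<in>?F. term_conv g h r * term_op r f)"
      by (simp add: term_conv_def sum_distrib_right)
    finally show "(A \<circ> B) f = (\<Sum>r\<in>?F. term_conv g h r * term_op r f)" .
  qed
qed

lemma Res_comp:
  assumes A: "expansion N A g" and B: "expansion N B h"
  shows "Res N (A \<circ> B) lam = (\<Sum>pq\<in>{pq\<in>{p. g p \<noteq> 0} \<times> {q. h q \<noteq> 0}. fst (term_mult (fst pq) (snd pq)) = lam}.
       g (fst pq) * term_op (fst pq) (h (snd pq)))"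
proof -
  let ?S = "{p. g p \<noteq> 0} \<times> {q. h q \<noteq> 0}"
  let ?m = "\<lambda>pq. term_mult (fst pq) (snd pq)"
  let ?X = "\<lambda>pq. g (fst pq) * term_op (fst pq) (h (snd pq))"
  have finS: "finite ?S" using expansion_finite[OF A] expansion_finite[OF B] by auto
  let ?F = "{r\<in>?m ` ?S. fst r = lam}"
  have finF: "finite ?F" using finS by auto
  have "Res N (A \<circ> B) lam = (\<Sum>r\<in>{r. term_conv g h r \<noteq> 0 \<and> fst r = lam}. term_conv g h r)"
    by (rule Res_alt[OF expansion_comp[OF A B]])
  also have "\<dots> = (\<Sum>r\<in>?F. term_conv g h r)"
  proof (rule sum.mono_neutral_left[OF finF])
    show "{r. term_conv g h r \<noteq> 0 \<and> fst r = lam} \<subseteq> ?F"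
    proof
      fix r assume "r \<in> {r. term_conv g h r \<noteq> 0 \<and> fst r = lam}"
      then have c: "term_conv g h r \<noteq> 0" "fst r = lam" by auto
      have "{pq\<in>?S. ?m pq = r} \<noteq> {}"
      proof
        assume e: "{pq\<in>?S. ?m pq = r} = {}"
        have "term_conv g h r = 0" unfolding term_conv_def e by simp
        then show False using c by simp
      qed
      then obtain pq where "pq \<in> ?S" "?m pq = r" "fst r = lam" using c by blast
      then show "r \<in> ?F" by force
    qed
  qed auto
  also have "\<dots> = (\<Sum>r\<in>?F. \<Sum>pq\<in>{pq\<in>{pq\<in>?S. fst (?m pq) = lam}. ?m pq = r}. ?X pq)"
    unfolding term_conv_def by (rule sum.cong) (auto intro!: sum.cong)
  also have "\<dots> = (\<Sum>pq\<in>{pq\<in>?S. fst (?m pq) = lam}. ?X pq)"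
    by (rule sum.group) (use finS in auto)
  finally show ?thesis .
qed

definition term_id :: "shift_perm" where "term_id = ((\<lambda>_. 0), id)"

lemma admissible_term_id: "admissible N term_id" by (simp add: admissible_def term_id_def wts_def)

lemma term_op_term_id: "term_op term_id f = f"
  by (simp add: term_op_def term_id_def shift_affine_subst permv_affine_subst affine_subst_id flip: id_def)

lemma expansion_mult_const: "expansion N (\<lambda>f. c * f) (\<lambda>p. if p = term_id then c else 0)"
proof (rule expansionI[of "{term_id}"])
  fix p assume "(if p = term_id then c else 0) \<noteq> 0"
  then show "p \<in> {term_id} \<and> admissible N p" using admissible_term_id by (cases "p = term_id") auto
qed (auto simp: term_op_term_id)

lemma expansion_id: "expansion N (\<lambda>f. f) (\<lambda>p. if p = term_id then 1 else 0)"
  using expansion_mult_const[of N 1] by simp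

lemma expansion_term_op:
  assumes "admissible N q"
  shows "expansion N (term_op q) (\<lambda>p. if p = q then 1 else 0)"
proof (rule expansionI[of "{q}"])
  fix p assume "(if p = q then 1 else 0) \<noteq> (0::ratf)"
  then show "p \<in> {q} \<and> admissible N p" using assms by (cases "p = q") auto
qed auto

abbreviation adj_swap :: "nat \<Rightarrow> nat \<Rightarrow> nat" where "adj_swap k \<equiv> Transposition.transpose k (Suc k)"

lemma sw_field_hom: "field_hom (sw k)"
  by (simp add: sw_affine_subst affine_subst_field_hom)

lemma sw_wv: "sw k (wv j) = wv (adj_swap k j)"
  by (simp add: sw_affine_subst affine_subst_wv)

lemma sw_wv1[simp]: "sw k (wv k) = wv (Suc k)" "sw k (wv (Suc k)) = wv k"
  by (simp_all add: sw_wv)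

lemma sw_wv_other: "j \<noteq> k \<Longrightarrow> j \<noteq> Suc k \<Longrightarrow> sw k (wv j) = wv j"
  by (simp add: sw_wv)

lemma sw_hb[simp]: "sw k hb = hb" and sw_tt[simp]: "sw k tt = tt" and sw_cv[simp]: "sw k (cv m) = cv m"
  and sw_cst[simp]: "sw k (cst z) = cst z"
  by (simp_all add: sw_affine_subst)

lemma sw_sw[simp]: "sw k (sw k f) = f"
proof -
  have "sw k (sw k f) = affine_subst (adj_swap k \<circ> adj_swap k) (\<lambda>i. 0) f" by (simp add: sw_affine_subst affine_subst_comp)
  also have "\<dots> = f" by (simp add: affine_subst_id)
  finally show ?thesis .
qed

lemma sw_far: assumes "Suc k < j \<or> Suc j < k" shows "sw j (sw k f) = sw k (sw j f)"
proof -
  have "adj_swap j \<circ> adj_swap k = adj_swap k \<circ> adj_swap j" using assms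
    by (auto simp: fun_eq_iff Transposition.transpose_def)
  then show ?thesis by (simp add: sw_affine_subst affine_subst_comp)
qed

lemma sw_braid: "sw k (sw (Suc k) (sw k f)) = sw (Suc k) (sw k (sw (Suc k) f))"
proof -
  have "adj_swap k \<circ> (adj_swap (Suc k) \<circ> adj_swap k) = adj_swap (Suc k) \<circ> (adj_swap k \<circ> adj_swap (Suc k))"
    by (auto simp: fun_eq_iff Transposition.transpose_def)
  then show ?thesis by (simp add: sw_affine_subst affine_subst_comp bij_comp o_assoc)
qed

lemmas sw_hom_simps = field_hom_add[OF sw_field_hom] field_hom_mult[OF sw_field_hom] field_hom_diff[OF sw_field_hom] field_hom_divide[OF sw_field_hom]
   field_hom_uminus[OF sw_field_hom] field_hom_one[OF sw_field_hom] field_hom_zero[OF sw_field_hom] field_hom_sum[OF sw_field_hom] field_hom_prod[OF sw_field_hom]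
   field_hom_of_nat[OF sw_field_hom] field_hom_power[OF sw_field_hom]

section \<open>The Demazure-Lusztig operators s_k\<close>

definition dl_coeff :: "nat \<Rightarrow> ratf" where "dl_coeff k = tt / (wv k - wv (Suc k))"

lemma sop_dl_coeff: "sop k f = sw k f + dl_coeff k * (sw k f - f)"
  by (simp add: sop_def dl_coeff_def)

lemma sw_dl_coeff: "sw k (dl_coeff k) = - dl_coeff k"
  by (simp add: dl_coeff_def sw_hom_simps minus_divide_right)

lemma sop_add: "sop k (f + g) = sop k f + sop k g"
  by (simp add: sop_dl_coeff sw_hom_simps algebra_simps)

lemma sop_zero[simp]: "sop k 0 = 0"
  by (simp add: sop_def sw_hom_simps)

lemma sop_diff: "sop k (f - g) = sop k f - sop k g"
  by (simp add: sop_dl_coeff sw_hom_simps algebra_simps)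

lemma sop_sum: "sop k (\<Sum>j\<in>J. F j) = (\<Sum>j\<in>J. sop k (F j))"
  by (induction J rule: infinite_finite_induct) (auto simp: sop_add)

lemma sop_scal: "sw k c = c \<Longrightarrow> sop k (c * f) = c * sop k f"
  by (simp add: sop_dl_coeff sw_hom_simps algebra_simps)

lemma wv_ne: "i \<noteq> j \<Longrightarrow> wv i - wv j \<noteq> 0"
  using wv_plus_hb_inj[of i 0 j 0] by auto

lemma sop_sop[simp]: "sop k (sop k f) = f"
proof -
  have ne: "wv k - wv (Suc k) \<noteq> 0" "wv (Suc k) - wv k \<noteq> 0" using wv_ne by auto
  show ?thesis by (simp add: sop_dl_coeff sw_hom_simps sw_dl_coeff algebra_simps)
qed

lemma sop_wv: "sop k (wv k * f) = wv (Suc k) * sop k f - tt * f"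
proof -
  have ne: "wv k - wv (Suc k) \<noteq> 0" using wv_ne by auto
  show ?thesis using ne by (simp add: sop_def sw_hom_simps field_simps)
qed

lemma sop_wv': "sop k (wv (Suc k) * f) = wv k * sop k f + tt * f"
proof -
  have ne: "wv k - wv (Suc k) \<noteq> 0" using wv_ne by auto
  show ?thesis using ne by (simp add: sop_def sw_hom_simps field_simps)
qed

lemma sop_far: assumes "Suc k < j \<or> Suc j < k" shows "sop j (sop k f) = sop k (sop j f)"
proof -
  have a: "sw j (wv k) = wv k" "sw j (wv (Suc k)) = wv (Suc k)" "sw k (wv j) = wv j" "sw k (wv (Suc j)) = wv (Suc j)"
    using assms by (auto intro!: sw_wv_other)
  have b: "sw j (dl_coeff k) = dl_coeff k" "sw k (dl_coeff j) = dl_coeff j" using a by (simp_all add: dl_coeff_def sw_hom_simps)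
  have c: "sw j (sw k f) = sw k (sw j f)" by (rule sw_far[OF assms])
  show ?thesis using assms a b c by (simp add: sop_dl_coeff sw_hom_simps algebra_simps)
qed

text \<open>With beta_k = t/(w_k - w_(k+1)), the braid relation for s_k = s_k^w + beta_k (s_k^w - 1) reduces
  to that of the s_k^w and to beta_k beta_(k+1) = z (beta_k + beta_(k+1)) for z = t/(w_k - w_(k+2)).\<close>
lemma braid_relation_abstract:
  fixes P1 P2 :: "ratf \<Rightarrow> ratf" and x y z :: ratf
  assumes h1: "field_hom P1" and h2: "field_hom P2"
    and g: "P1 x = - x" "P1 y = z" "P1 z = y" "P2 x = z" "P2 y = - y" "P2 z = x"
    and inv: "\<And>u. P1 (P1 u) = u" "\<And>u. P2 (P2 u) = u"
    and br: "\<And>u. P2 (P1 (P2 u)) = P1 (P2 (P1 u))"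
    and rel: "x * y = z * x + z * y"
  shows "(\<lambda>f. P1 f + x * (P1 f - f)) ((\<lambda>f. P2 f + y * (P2 f - f)) ((\<lambda>f. P1 f + x * (P1 f - f)) f))
       = (\<lambda>f. P2 f + y * (P2 f - f)) ((\<lambda>f. P1 f + x * (P1 f - f)) ((\<lambda>f. P2 f + y * (P2 f - f)) f))"
  apply (simp only: field_hom_add[OF h1] field_hom_mult[OF h1] field_hom_diff[OF h1] field_hom_uminus[OF h1]
      field_hom_add[OF h2] field_hom_mult[OF h2] field_hom_diff[OF h2] field_hom_uminus[OF h2] g inv br)
  using rel apply algebra
  done

lemma dl_coeff_relation: fixes a b c t :: "'a::field"
  assumes "a - b \<noteq> 0" "b - c \<noteq> 0" "a - c \<noteq> 0"
  shows "t / (a - b) * (t / (b - c)) = t / (a - c) * (t / (a - b)) + t / (a - c) * (t / (b - c))"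
proof -
  have s: "t / (a - b) + t / (b - c) = t * (a - c) / ((a - b) * (b - c))"
    using assms by (simp add: add_frac_eq algebra_simps)
  have "t / (a - c) * (t / (a - b)) + t / (a - c) * (t / (b - c)) = t / (a - c) * (t / (a - b) + t / (b - c))"
    by (simp add: distrib_left)
  also have "\<dots> = t / (a - c) * (t * (a - c) / ((a - b) * (b - c)))" by (simp only: s)
  also have "\<dots> = t * t / ((a - b) * (b - c))" using assms by simp
  also have "\<dots> = t / (a - b) * (t / (b - c))" by simp
  finally show ?thesis by simp
qed

lemma sop_braid: "sop k (sop (Suc k) (sop k f)) = sop (Suc k) (sop k (sop (Suc k) f))"
proof -
  define z where "z = tt / (wv k - wv (Suc (Suc k)))"
  have ne: "wv k - wv (Suc k) \<noteq> 0" "wv (Suc k) - wv (Suc (Suc k)) \<noteq> 0" "wv k - wv (Suc (Suc k)) \<noteq> 0"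
    "wv (Suc k) - wv k \<noteq> 0" "wv (Suc (Suc k)) - wv (Suc k) \<noteq> 0" "wv (Suc (Suc k)) - wv k \<noteq> 0"
    by (rule wv_ne; simp)+
  have o: "sw k (wv (Suc (Suc k))) = wv (Suc (Suc k))" "sw (Suc k) (wv k) = wv k"
    by (auto intro!: sw_wv_other)
  have e1: "sop k = (\<lambda>f. sw k f + dl_coeff k * (sw k f - f))" by (simp add: sop_dl_coeff fun_eq_iff)
  have e2: "sop (Suc k) = (\<lambda>f. sw (Suc k) f + dl_coeff (Suc k) * (sw (Suc k) f - f))"
    by (simp add: sop_dl_coeff fun_eq_iff)
  show ?thesis unfolding e1 e2
  proof (rule braid_relation_abstract[OF sw_field_hom sw_field_hom, where z = z])
    show "sw k (dl_coeff k) = - dl_coeff k" "sw (Suc k) (dl_coeff (Suc k)) = - dl_coeff (Suc k)" by (rule sw_dl_coeff)+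
    show "sw k (dl_coeff (Suc k)) = z" "sw k z = dl_coeff (Suc k)" "sw (Suc k) (dl_coeff k) = z" "sw (Suc k) z = dl_coeff k"
      using o by (simp_all add: dl_coeff_def z_def sw_hom_simps)
    show "\<And>u. sw k (sw k u) = u" "\<And>u. sw (Suc k) (sw (Suc k) u) = u" by simp_all
    show "\<And>u. sw (Suc k) (sw k (sw (Suc k) u)) = sw k (sw (Suc k) (sw k u))" by (simp add: sw_braid)
    show "dl_coeff k * dl_coeff (Suc k) = z * dl_coeff k + z * dl_coeff (Suc k)"
      unfolding dl_coeff_def z_def by (rule dl_coeff_relation) (use ne in auto)
  qed
qed

lemma schain_zero[simp]: "schain k 0 = 0"
  by (induction k) auto
lemma schain_add: "schain k (f + g) = schain k f + schain k g"
  by (induction k) (auto simp: sop_add)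
lemma schain_diff: "schain k (f - g) = schain k f - schain k g"
  by (induction k) (auto simp: sop_diff)
lemma schain_sum: "schain k (\<Sum>j\<in>J. F j) = (\<Sum>j\<in>J. schain k (F j))"
  by (induction J rule: infinite_finite_induct) (auto simp: schain_add)
lemma schain_scal: "(\<And>j. sw j c = c) \<Longrightarrow> schain k (c * f) = c * schain k f"
  by (induction k) (auto simp: sop_scal)

lemma sop_schain_commute: "Suc (Suc m) \<le> j \<Longrightarrow> sop j (schain m f) = schain m (sop j f)"
proof (induction m)
  case 0 then show ?case by simp
next
  case (Suc m)
  then have "Suc (Suc m) < j" by simp
  then have "sop j (sop (Suc m) X) = sop (Suc m) (sop j X)" for X by (intro sop_far) auto
  then show ?case using Suc by simp
qed

lemma schain_sop_braid: "schain (Suc (Suc m)) (sop (Suc (Suc m)) f) = sop (Suc m) (schain (Suc (Suc m)) f)"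
proof -
  have "schain (Suc (Suc m)) (sop (Suc (Suc m)) f) = sop (Suc (Suc m)) (sop (Suc m) (sop (Suc (Suc m)) (schain m f)))"
    by (simp add: sop_schain_commute)
  also have "\<dots> = sop (Suc m) (sop (Suc (Suc m)) (sop (Suc m) (schain m f)))"
    by (simp add: sop_braid)
  finally show ?thesis by simp
qed

lemma schain_sij1: "schain (Suc k) (sij 1 (Suc (Suc k)) f) = schain k f"
proof (induction k arbitrary: f)
  case 0 then show ?case by simp
next
  case (Suc m)
  have "schain (Suc (Suc m)) (sij 1 (Suc (Suc (Suc m))) f)
      = schain (Suc (Suc m)) (sop (Suc (Suc m)) (sij 1 (Suc (Suc m)) (sop (Suc (Suc m)) f)))"
    by simp
  also have "\<dots> = sop (Suc m) (schain (Suc (Suc m)) (sij 1 (Suc (Suc m)) (sop (Suc (Suc m)) f)))"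
    by (rule schain_sop_braid)
  also have "\<dots> = sop (Suc m) (sop (Suc (Suc m)) (schain (Suc m) (sij 1 (Suc (Suc m)) (sop (Suc (Suc m)) f))))"
    by simp
  also have "\<dots> = sop (Suc m) (sop (Suc (Suc m)) (schain m (sop (Suc (Suc m)) f)))"
    by (simp only: Suc.IH)
  also have "\<dots> = sop (Suc m) (schain m f)"
    by (simp add: sop_schain_commute)
  finally show ?case by simp
qed

lemma field_hom_zk: "field_hom \<phi> \<Longrightarrow> \<phi> hb = hb \<Longrightarrow> (\<And>m. \<phi> (cv m) = cv m) \<Longrightarrow> (\<And>z. \<phi> (cst z) = cst z) \<Longrightarrow>
   \<phi> (zk l \<epsilon> k) = zk l \<epsilon> k"
  by (simp add: zk_def field_hom_mult field_hom_uminus field_hom_add field_hom_sum field_hom_of_nat)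

lemma sw_zk[simp]: "sw j (zk l \<epsilon> k) = zk l \<epsilon> k"
  by (rule field_hom_zk[OF sw_field_hom]) auto

lemma schain_mult_wv1: "schain k (wv 1 * g) = wv (Suc k) * schain k g - tt * (\<Sum>j\<in>{2..Suc k}. schain k (sij 1 j g))"
proof (induction k)
  case 0 then show ?case by simp
next
  case (Suc k)
  have "schain (Suc k) (wv 1 * g) = sop (Suc k) (schain k (wv 1 * g))" by simp
  also have "\<dots> = sop (Suc k) (wv (Suc k) * schain k g - tt * (\<Sum>j\<in>{2..Suc k}. schain k (sij 1 j g)))"
    by (simp only: Suc.IH)
  also have "\<dots> = wv (Suc (Suc k)) * schain (Suc k) g - tt * schain k g
        - tt * (\<Sum>j\<in>{2..Suc k}. schain (Suc k) (sij 1 j g))"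
    by (simp only: sop_diff sop_wv sop_scal[OF sw_tt] sop_sum schain.simps comp_def)
  also have "tt * schain k g = tt * schain (Suc k) (sij 1 (Suc (Suc k)) g)" by (simp only: schain_sij1)
  also have "wv (Suc (Suc k)) * schain (Suc k) g - tt * schain (Suc k) (sij 1 (Suc (Suc k)) g)
        - tt * (\<Sum>j\<in>{2..Suc k}. schain (Suc k) (sij 1 j g))
      = wv (Suc (Suc k)) * schain (Suc k) g - tt * (\<Sum>j\<in>{2..Suc (Suc k)}. schain (Suc k) (sij 1 j g))"
  proof -
    have "{2..Suc (Suc k)} = insert (Suc (Suc k)) {2..Suc k}" by auto
    then show ?thesis by (simp add: algebra_simps)
  qed
  finally show ?case .
qed

lemma sop_sij_conj: "Suc (Suc i) \<le> j \<Longrightarrow> sop i (sij i j (sop i f)) = sij (Suc i) j f"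
proof (induction j arbitrary: f rule: dec_induct)
  case base
  have "sop i (sij i (Suc (Suc i)) (sop i f)) = sop i (sop (Suc i) (sop i (sop (Suc i) (sop i f))))" by simp
  also have "\<dots> = sop i (sop i (sop (Suc i) (sop i (sop i f))))" by (simp only: sop_braid)
  also have "\<dots> = sij (Suc i) (Suc (Suc i)) f" by simp
  finally show ?case .
next
  case (step j)
  have far: "sop i (sop j X) = sop j (sop i X)" for X using step by (intro sop_far) auto
  have "sop i (sij i (Suc j) (sop i f)) = sop i (sop j (sij i j (sop j (sop i f))))" using step by simp
  also have "\<dots> = sop j (sop i (sij i j (sop i (sop j f))))" by (simp only: far)
  also have "\<dots> = sop j (sij (Suc i) j (sop j f))" by (simp only: step.IH)
  also have "\<dots> = sij (Suc i) (Suc j) f" using step by simp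
  finally show ?case .
qed

section \<open>The operators pi, X_i^-1 and Y_i\<close>

definition rot :: "nat \<Rightarrow> nat \<Rightarrow> nat" where
  "rot N i = (if 1 \<le> i \<and> i < N then Suc i else if i = N then 1 else i)"
definition rot_inv :: "nat \<Rightarrow> nat \<Rightarrow> nat" where
  "rot_inv N i = (if 2 \<le> i \<and> i \<le> N then i - 1 else if i = 1 then N else i)"

lemma rot_rot_inv: "1 \<le> N \<Longrightarrow> rot N (rot_inv N i) = i" by (auto simp: rot_def rot_inv_def)
lemma rot_inv_rot: "1 \<le> N \<Longrightarrow> rot_inv N (rot N i) = i" by (auto simp: rot_def rot_inv_def)

lemma rot_permutes: assumes "1 \<le> N" shows "rot N permutes {1..N}"
proof (rule bij_imp_permutes)
  show "bij_betw (rot N) {1..N} {1..N}"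
    by (rule bij_betw_byWitness[where f' = "rot_inv N"]) (use assms in \<open>auto simp: rot_def rot_inv_def\<close>)
  show "\<And>x. x \<notin> {1..N} \<Longrightarrow> rot N x = x" using assms by (auto simp: rot_def)
qed

lemma rot_inv_permutes: assumes "1 \<le> N" shows "rot_inv N permutes {1..N}"
proof (rule bij_imp_permutes)
  show "bij_betw (rot_inv N) {1..N} {1..N}"
    by (rule bij_betw_byWitness[where f' = "rot N"]) (use assms in \<open>auto simp: rot_def rot_inv_def\<close>)
  show "\<And>x. x \<notin> {1..N} \<Longrightarrow> rot_inv N x = x" using assms by (auto simp: rot_inv_def)
qed

definition pi_term :: "nat \<Rightarrow> shift_perm" where "pi_term N = (unitv 1, rot N)"
definition pi_inv_term :: "nat \<Rightarrow> shift_perm" where "pi_inv_term N = (- unitv N, rot_inv N)"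
definition pi_inv :: "nat \<Rightarrow> op" where "pi_inv N = term_op (pi_inv_term N)"

lemma admissible_pi_term: "1 \<le> N \<Longrightarrow> admissible N (pi_term N)"
  using rot_permutes[of N] by (simp add: admissible_def pi_term_def wts_def unitv_def)
lemma admissible_pi_inv_term: "1 \<le> N \<Longrightarrow> admissible N (pi_inv_term N)"
  using rot_inv_permutes[of N] by (simp add: admissible_def pi_inv_term_def wts_def unitv_def)

lemma piop_term_op: assumes "1 \<le> N" shows "piop N = term_op (pi_term N)"
proof -
  have "term_op (pi_term N) = affine_subst (rot N) (\<lambda>i. unitv 1 (rot N i))"
    using term_op_affine_subst[of "pi_term N" "{1..N}"] rot_permutes[OF assms] by (simp add: pi_term_def)
  also have "(\<lambda>i. unitv 1 (rot N i)) = unitv N"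
    using assms by (auto simp: fun_eq_iff unitv_def rot_def)
  also have "affine_subst (rot N) (unitv N) = piop N"
    unfolding affine_subst_def piop_def
    by (rule arg_cong[where f = wsubst]) (use assms in \<open>auto simp: fun_eq_iff affine_wmap_def rot_def unitv_def\<close>)
  finally show ?thesis by simp
qed

lemma term_mult_pi_pi_inv: "1 \<le> N \<Longrightarrow> term_mult (pi_term N) (pi_inv_term N) = term_id"
proof -
  assume N: "1 \<le> N"
  have "inv (rot N) = rot_inv N"
    by (rule inv_equality) (use N in \<open>auto simp: rot_rot_inv rot_inv_rot\<close>)
  then show ?thesis using N
    by (auto simp: term_mult_def pi_term_def pi_inv_term_def term_id_def fun_eq_iff unitv_def rot_rot_inv rot_inv_def rot_def)
qed

lemma term_mult_pi_inv_pi: "1 \<le> N \<Longrightarrow> term_mult (pi_inv_term N) (pi_term N) = term_id"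
proof -
  assume N: "1 \<le> N"
  have "inv (rot_inv N) = rot N"
    by (rule inv_equality) (use N in \<open>auto simp: rot_rot_inv rot_inv_rot\<close>)
  then show ?thesis using N
    by (auto simp: term_mult_def pi_term_def pi_inv_term_def term_id_def fun_eq_iff unitv_def rot_inv_rot rot_inv_def rot_def)
qed

lemma piop_pi_inv: "1 \<le> N \<Longrightarrow> piop N (pi_inv N f) = f"
  by (simp add: piop_term_op pi_inv_def term_op_term_mult[OF admissible_pi_term admissible_pi_inv_term] term_mult_pi_pi_inv term_op_term_id)
lemma pi_inv_piop: "1 \<le> N \<Longrightarrow> pi_inv N (piop N f) = f"
  by (simp add: piop_term_op pi_inv_def term_op_term_mult[OF admissible_pi_inv_term admissible_pi_term] term_mult_pi_inv_pi term_op_term_id)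

lemma piop_field_hom: "1 \<le> N \<Longrightarrow> field_hom (piop N)"
  using admissible_pi_term[of N] term_op_field_hom[of "pi_term N" "{1..N}"] by (simp add: piop_term_op admissible_def)

lemma piop_wv_last: "1 \<le> N \<Longrightarrow> piop N (wv N) = wv 1 + hb"
  using term_op_wv[of "pi_term N" "{1..N}" N] rot_permutes by (simp add: piop_term_op pi_term_def rot_def unitv_def)

lemma term_op_fixes_constants: "admissible N p \<Longrightarrow> term_op p hb = hb \<and> term_op p tt = tt \<and> term_op p (cv m) = cv m \<and> term_op p (cst z) = cst z"
proof -
  assume "admissible N p"
  then have "snd p permutes {1..N}" by (simp add: admissible_def)
  then show ?thesis using term_op_affine_subst[of p "{1..N}"] permutes_bij[of "snd p"] by simp
qed

lemma admissible_term_op_field_hom: "admissible N p \<Longrightarrow> field_hom (term_op p)"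
  using term_op_field_hom[of p "{1..N}"] by (simp add: admissible_def)

lemma term_op_zk: "admissible N p \<Longrightarrow> term_op p (zk l \<epsilon> k) = zk l \<epsilon> k"
  by (rule field_hom_zk) (auto simp: term_op_fixes_constants admissible_term_op_field_hom)

definition schain_rev :: "nat \<Rightarrow> op" where "schain_rev k = foldr (\<lambda>j acc. sop j \<circ> acc) [1..<Suc k] id"

lemma foldr_sop_comp: "foldr (\<lambda>j acc. sop j \<circ> acc) xs B = foldr (\<lambda>j acc. sop j \<circ> acc) xs id \<circ> B"
  by (induction xs) auto

lemma schain_rev_Suc: "schain_rev (Suc k) = schain_rev k \<circ> sop (Suc k)"
  unfolding schain_rev_def by (simp del: upt_Suc add: upt_Suc_append foldr_sop_comp[of _ "sop (Suc k)"])

lemma schain_schain_rev: "schain k (schain_rev k f) = f"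
  by (induction k arbitrary: f) (auto simp: schain_rev_def[of 0] schain_rev_Suc)

lemma schain_rev_schain: "schain_rev k (schain k f) = f"
  by (induction k arbitrary: f) (auto simp: schain_rev_def[of 0] schain_rev_Suc)

fun Xinv_word :: "nat \<Rightarrow> nat \<Rightarrow> op" where
  "Xinv_word N 0 = id"
| "Xinv_word N (Suc 0) = schain_rev (N - 1) \<circ> pi_inv N"
| "Xinv_word N (Suc (Suc i)) = sop (Suc i) \<circ> Xinv_word N (Suc i) \<circ> sop (Suc i)"

lemma Xop_Xinv_word: "1 \<le> N \<Longrightarrow> Xop N (Suc i) (Xinv_word N (Suc i) f) = f \<and> Xinv_word N (Suc i) (Xop N (Suc i) f) = f"
proof (induction i arbitrary: f)
  case 0 then show ?case by (simp add: schain_schain_rev schain_rev_schain piop_pi_inv pi_inv_piop)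
next
  case (Suc i) then show ?case by simp
qed

lemma Xinv_eq_Xinv_word: "1 \<le> N \<Longrightarrow> Xinv N (Suc i) = Xinv_word N (Suc i)"
  unfolding Xinv_def by (rule inv_equality) (simp_all add: Xop_Xinv_word)

definition Xinv_normal :: "nat \<Rightarrow> nat \<Rightarrow> op" where
  "Xinv_normal N i = foldr (\<lambda>j acc. sop j \<circ> acc) [i..<N] (pi_inv N)"

lemma Xinv_normal_step: "i < N \<Longrightarrow> Xinv_normal N i = sop i \<circ> Xinv_normal N (Suc i)"
  by (simp add: Xinv_normal_def upt_conv_Cons)

lemma Xinv_normal_last: "Xinv_normal N N = pi_inv N" by (simp add: Xinv_normal_def)

lemma Xinv_word_1: "1 \<le> N \<Longrightarrow> Xinv_word N 1 = Xinv_normal N 1"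
proof -
  assume N: "1 \<le> N"
  then have "[1..<Suc (N - 1)] = [1..<N]" by simp
  then show ?thesis by (simp add: Xinv_normal_def schain_rev_def foldr_sop_comp[of _ "pi_inv N"])
qed

lemma sop_Yfac_conj:
  assumes "1 \<le> i" "Suc i \<le> N"
  shows "sop i (Yfac N l \<epsilon> i k (sop i f)) = Yfac N l \<epsilon> (Suc i) k f"
proof -
  have split: "{Suc i..N} = insert (Suc i) {Suc (Suc i)..N}" using assms by auto
  have c: "sw i (hb + zk l \<epsilon> k) = hb + zk l \<epsilon> k" by (simp add: sw_hom_simps)
  have "Yfac N l \<epsilon> i k (sop i f) = wv i * sop i f - (hb + zk l \<epsilon> k) * sop i f
        + tt * (sop i (sop i f) + (\<Sum>j\<in>{Suc (Suc i)..N}. sij i j (sop i f)))"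
    unfolding Yfac_def split by (simp add: algebra_simps)
  then have "sop i (Yfac N l \<epsilon> i k (sop i f)) = (wv (Suc i) * f - tt * sop i f) - (hb + zk l \<epsilon> k) * f
        + tt * (sop i f + (\<Sum>j\<in>{Suc (Suc i)..N}. sop i (sij i j (sop i f))))"
    by (simp add: sop_add sop_diff sop_wv sop_scal[OF c] sop_scal[OF sw_tt] sop_sum)
  also have "(\<Sum>j\<in>{Suc (Suc i)..N}. sop i (sij i j (sop i f))) = (\<Sum>j\<in>{Suc (Suc i)..N}. sij (Suc i) j f)"
    by (rule sum.cong) (auto simp: sop_sij_conj)
  finally show ?thesis by (simp add: Yfac_def algebra_simps)
qed

lemma Xop1_Yfac1:
  assumes N: "1 \<le> N"
  shows "Xop N 1 (Yfac N l \<epsilon> 1 k f) = (wv 1 - zk l \<epsilon> k) * Xop N 1 f"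
proof -
  let ?S = "schain (N - 1)"
  let ?z = "zk l \<epsilon> k"
  have fx: "sw j (hb + ?z) = hb + ?z" for j by (simp add: sw_hom_simps)
  have set: "{Suc 1..N} = {2..Suc (N - 1)}" using N by auto
  have SN: "Suc (N - 1) = N" using N by simp
  have Y: "Yfac N l \<epsilon> 1 k f = wv 1 * f - (hb + ?z) * f + tt * (\<Sum>j\<in>{2..Suc (N - 1)}. sij 1 j f)"
    unfolding Yfac_def set by (simp add: algebra_simps)
  have "?S (Yfac N l \<epsilon> 1 k f) = ?S (wv 1 * f - (hb + ?z) * f + tt * (\<Sum>j\<in>{2..Suc (N - 1)}. sij 1 j f))"
    by (simp only: Y)
  also have "\<dots> = (wv (Suc (N - 1)) * ?S f - tt * (\<Sum>j\<in>{2..Suc (N - 1)}. ?S (sij 1 j f)))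
      - (hb + ?z) * ?S f + tt * (\<Sum>j\<in>{2..Suc (N - 1)}. ?S (sij 1 j f))"
    by (simp only: schain_add schain_diff schain_mult_wv1 schain_scal[OF fx] schain_scal[OF sw_tt] schain_sum)
  also have "\<dots> = (wv N - hb - ?z) * ?S f" by (simp only: SN) (simp add: algebra_simps)
  finally have "Xop N 1 (Yfac N l \<epsilon> 1 k f) = piop N ((wv N - hb - ?z) * ?S f)" by simp
  also have "\<dots> = (wv 1 - ?z) * Xop N 1 f"
  proof -
    have h: "field_hom (piop N)" by (rule piop_field_hom[OF N])
    have "piop N hb = hb" "piop N ?z = ?z"
      using N term_op_fixes_constants[OF admissible_pi_term] term_op_zk[OF admissible_pi_term] by (simp_all add: piop_term_op)
    then show ?thesis using N by (simp add: field_hom_mult[OF h] field_hom_diff[OF h] piop_wv_last)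
  qed
  finally show ?thesis .
qed

lemma Yfac1_Xinv_word1:
  assumes N: "1 \<le> N"
  shows "Yfac N l \<epsilon> 1 k (Xinv_word N 1 f) = Xinv_word N 1 ((wv 1 - zk l \<epsilon> k) * f)"
proof -
  have "Yfac N l \<epsilon> 1 k (Xinv_word N 1 f) = Xinv_word N 1 (Xop N 1 (Yfac N l \<epsilon> 1 k (Xinv_word N 1 f)))"
    using Xop_Xinv_word[OF N, of 0] by simp
  also have "\<dots> = Xinv_word N 1 ((wv 1 - zk l \<epsilon> k) * f)"
    using Xop1_Yfac1[OF N] Xop_Xinv_word[OF N, of 0] by simp
  finally show ?thesis .
qed

lemma foldr_Yfac1:
  assumes N: "1 \<le> N"
  shows "foldr (\<lambda>k acc. Yfac N l \<epsilon> 1 k \<circ> acc) ks (Xinv_word N 1) f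
       = Xinv_word N 1 (prod_list (map (\<lambda>k. wv 1 - zk l \<epsilon> k) ks) * f)"
proof (induction ks arbitrary: f)
  case Nil then show ?case by (simp del: Xinv_word.simps)
next
  case (Cons k ks)
  have "foldr (\<lambda>k acc. Yfac N l \<epsilon> 1 k \<circ> acc) (k # ks) (Xinv_word N 1) f
      = Yfac N l \<epsilon> 1 k (foldr (\<lambda>k acc. Yfac N l \<epsilon> 1 k \<circ> acc) ks (Xinv_word N 1) f)"
    by (simp only: foldr.simps o_apply)
  also have "\<dots> = Yfac N l \<epsilon> 1 k (Xinv_word N 1 (prod_list (map (\<lambda>k. wv 1 - zk l \<epsilon> k) ks) * f))"
    by (simp only: Cons.IH)
  also have "\<dots> = Xinv_word N 1 ((wv 1 - zk l \<epsilon> k) * (prod_list (map (\<lambda>k. wv 1 - zk l \<epsilon> k) ks) * f))"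
    by (rule Yfac1_Xinv_word1[OF N])
  finally show ?case by (simp only: list.map prod_list.Cons mult.assoc)
qed

definition Y_factor :: "nat \<Rightarrow> complex \<Rightarrow> ratf" where
  "Y_factor l \<epsilon> = (\<Prod>k\<in>{1..l}. wv 1 - zk l \<epsilon> k)"

lemma Yop1_eq: assumes N: "1 \<le> N" shows "Yop N l \<epsilon> 1 f = Xinv_normal N 1 (Y_factor l \<epsilon> * f)"
proof -
  have "Y_factor l \<epsilon> = prod (\<lambda>k. wv 1 - zk l \<epsilon> k) (set [1..<Suc l])"
    unfolding Y_factor_def by (simp only: set_upt atLeastLessThanSuc_atLeastAtMost)
  also have "\<dots> = prod_list (map (\<lambda>k. wv 1 - zk l \<epsilon> k) [1..<Suc l])"
    by (rule prod.distinct_set_conv_list) simp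
  finally have c: "prod_list (map (\<lambda>k. wv 1 - zk l \<epsilon> k) [1..<Suc l]) = Y_factor l \<epsilon>" by simp
  have X: "Xinv N 1 = Xinv_word N 1" using Xinv_eq_Xinv_word[OF N, of 0] by simp
  have "Yop N l \<epsilon> 1 f = foldr (\<lambda>k acc. Yfac N l \<epsilon> 1 k \<circ> acc) [1..<Suc l] (Xinv_word N 1) f"
    unfolding Yop_def X ..
  also have "\<dots> = Xinv_word N 1 (Y_factor l \<epsilon> * f)" by (simp only: foldr_Yfac1[OF N] c)
  also have "\<dots> = Xinv_normal N 1 (Y_factor l \<epsilon> * f)" by (simp only: Xinv_word_1[OF N])
  finally show ?thesis .
qed

lemma foldr_conj:
  assumes "\<And>k g. s (F k (s g)) = G k g" "\<And>g. s (s g) = g"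
  shows "s (foldr (\<lambda>k acc. F k \<circ> acc) ks B (s f)) = foldr (\<lambda>k acc. G k \<circ> acc) ks (\<lambda>g. s (B (s g))) f"
proof (induction ks arbitrary: f)
  case Nil then show ?case by simp
next
  case (Cons k ks)
  have "s (foldr (\<lambda>k acc. F k \<circ> acc) (k # ks) B (s f)) = s (F k (foldr (\<lambda>k acc. F k \<circ> acc) ks B (s f)))"
    by (simp only: foldr.simps o_apply)
  also have "\<dots> = s (F k (s (s (foldr (\<lambda>k acc. F k \<circ> acc) ks B (s f)))))" by (simp only: assms(2))
  also have "\<dots> = G k (s (foldr (\<lambda>k acc. F k \<circ> acc) ks B (s f)))" by (rule assms(1))
  also have "\<dots> = G k (foldr (\<lambda>k acc. G k \<circ> acc) ks (\<lambda>g. s (B (s g))) f)" by (simp only: Cons.IH)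
  also have "\<dots> = foldr (\<lambda>k acc. G k \<circ> acc) (k # ks) (\<lambda>g. s (B (s g))) f"
    by (simp only: foldr.simps o_apply)
  finally show ?case .
qed

lemma Yop_Suc_conj:
  assumes "1 \<le> i" "Suc i \<le> N"
  shows "Yop N l \<epsilon> (Suc i) f = sop i (Yop N l \<epsilon> i (sop i f))"
proof -
  obtain i' where i: "i = Suc i'" using assms by (cases i) auto
  have N: "1 \<le> N" using assms by simp
  have X: "Xinv N (Suc i) = (\<lambda>g. sop i (Xinv N i (sop i g)))"
    using Xinv_eq_Xinv_word[OF N, of i] Xinv_eq_Xinv_word[OF N, of i'] i by (simp add: fun_eq_iff)
  show ?thesis unfolding Yop_def X
    by (rule foldr_conj[symmetric]) (use sop_Yfac_conj[OF assms] in auto)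
qed

section \<open>Restriction to symmetric functions\<close>

definition term_swap :: "nat \<Rightarrow> shift_perm" where "term_swap k = ((\<lambda>_. 0), adj_swap k)"

lemma admissible_term_swap: "1 \<le> k \<Longrightarrow> Suc k \<le> N \<Longrightarrow> admissible N (term_swap k)"
  by (simp add: admissible_def term_swap_def wts_def permutes_swap_id)

lemma term_op_term_swap: "term_op (term_swap k) = sw k"
  by (simp add: fun_eq_iff term_op_def term_swap_def shift_permv sw_affine_subst)

lemma term_swap_ne_term_id: "term_swap k \<noteq> term_id"
  by (simp add: term_swap_def term_id_def transpose_eq_id_iff)

definition sop_coeffs :: "nat \<Rightarrow> shift_perm \<Rightarrow> ratf" where
  "sop_coeffs k p = (if p = term_swap k then 1 + dl_coeff k else if p = term_id then - dl_coeff k else 0)"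

lemma expansion_sop: assumes "1 \<le> k" "Suc k \<le> N" shows "expansion N (sop k) (sop_coeffs k)"
proof (rule expansionI[of "{term_swap k, term_id}"])
  fix p assume "sop_coeffs k p \<noteq> 0"
  then show "p \<in> {term_swap k, term_id} \<and> admissible N p" using admissible_term_swap[OF assms] admissible_term_id
    by (auto simp: sop_coeffs_def split: if_splits)
next
  fix f show "sop k f = (\<Sum>p\<in>{term_swap k, term_id}. sop_coeffs k p * term_op p f)"
    using term_swap_ne_term_id[of k] term_swap_ne_term_id[of k, symmetric] by (simp add: sop_coeffs_def term_op_term_swap term_op_term_id sop_dl_coeff algebra_simps)
qed simp

lemma has_expansion_comp: "has_expansion N A \<Longrightarrow> has_expansion N B \<Longrightarrow> has_expansion N (A \<circ> B)"
  unfolding has_expansion_def using expansion_comp by blast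
lemma has_expansion_sop: "1 \<le> k \<Longrightarrow> Suc k \<le> N \<Longrightarrow> has_expansion N (sop k)"
  unfolding has_expansion_def using expansion_sop by blast
lemma has_expansion_term_op: "admissible N q \<Longrightarrow> has_expansion N (term_op q)"
  unfolding has_expansion_def using expansion_term_op by blast
lemma has_expansion_mult_const: "has_expansion N (\<lambda>f. c * f)"
  unfolding has_expansion_def using expansion_mult_const by blast
lemma has_expansion_id: "has_expansion N id"
  unfolding has_expansion_def id_def using expansion_id by blast

lemma shift_inv_eq_iff: fixes \<nu> x lam :: "nat \<Rightarrow> int" shows "bij \<tau> \<Longrightarrow> (\<lambda>i. \<nu> i + x (inv \<tau> i)) = lam \<longleftrightarrow> x = (\<lambda>i. lam (\<tau> i) - \<nu> (\<tau> i))"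
proof
  assume b: "bij \<tau>" and e: "(\<lambda>i. \<nu> i + x (inv \<tau> i)) = lam"
  show "x = (\<lambda>i. lam (\<tau> i) - \<nu> (\<tau> i))"
  proof
    fix i
    have "\<nu> (\<tau> i) + x (inv \<tau> (\<tau> i)) = lam (\<tau> i)" using fun_cong[OF e, of "\<tau> i"] by simp
    then have "\<nu> (\<tau> i) + x i = lam (\<tau> i)" using b by (simp add: bij_is_inj)
    then show "x i = lam (\<tau> i) - \<nu> (\<tau> i)" by (simp add: algebra_simps)
  qed
next
  assume b: "bij \<tau>" and e: "x = (\<lambda>i. lam (\<tau> i) - \<nu> (\<tau> i))"
  show "(\<lambda>i. \<nu> i + x (inv \<tau> i)) = lam" using b by (simp add: e fun_eq_iff bij_is_surj surj_f_inv_f)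
qed

lemma Res_expansion_comp:
  assumes B: "expansion N B b" and A: "has_expansion N A" and F: "finite F" "{q. b q \<noteq> 0} \<subseteq> F"
  shows "Res N (B \<circ> A) lam = (\<Sum>q\<in>F. b q * term_op q (Res N A (\<lambda>i. lam (snd q i) - fst q (snd q i))))"
proof -
  obtain a where a: "expansion N A a" using A by (auto simp: has_expansion_def)
  let ?Sa = "{p. a p \<noteq> 0}" and ?Sb = "{q. b q \<noteq> 0}"
  have fa: "finite ?Sa" and fb: "finite ?Sb" using expansion_finite a B by auto
  have "Res N (B \<circ> A) lam = (\<Sum>pq\<in>{pq\<in>?Sb \<times> ?Sa. fst (term_mult (fst pq) (snd pq)) = lam}. b (fst pq) * term_op (fst pq) (a (snd pq)))"
    by (rule Res_comp[OF B a])
  also have "{pq\<in>?Sb \<times> ?Sa. fst (term_mult (fst pq) (snd pq)) = lam} = Sigma ?Sb (\<lambda>q. {p\<in>?Sa. fst (term_mult q p) = lam})"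
    by auto
  also have "(\<Sum>pq\<in>Sigma ?Sb (\<lambda>q. {p\<in>?Sa. fst (term_mult q p) = lam}). b (fst pq) * term_op (fst pq) (a (snd pq)))
      = (\<Sum>q\<in>?Sb. \<Sum>p\<in>{p\<in>?Sa. fst (term_mult q p) = lam}. b q * term_op q (a p))"
    by (subst sum.Sigma) (use fa fb in \<open>auto simp: split_beta\<close>)
  also have "\<dots> = (\<Sum>q\<in>?Sb. b q * term_op q (Res N A (\<lambda>i. lam (snd q i) - fst q (snd q i))))"
  proof (rule sum.cong[OF refl])
    fix q assume q: "q \<in> ?Sb"
    then have dq: "admissible N q" using expansion_admissible[OF B] by auto
    then have bq: "bij (snd q)" using permutes_bij unfolding admissible_def by blast
    have set: "{p\<in>?Sa. fst (term_mult q p) = lam} = {p. a p \<noteq> 0 \<and> fst p = (\<lambda>i. lam (snd q i) - fst q (snd q i))}"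
      using shift_inv_eq_iff[OF bq] by (auto simp: term_mult_def)
    show "(\<Sum>p\<in>{p\<in>?Sa. fst (term_mult q p) = lam}. b q * term_op q (a p)) = b q * term_op q (Res N A (\<lambda>i. lam (snd q i) - fst q (snd q i)))"
      unfolding set Res_alt[OF a] using admissible_term_op_field_hom[OF dq] by (simp add: field_hom_sum sum_distrib_left)
  qed
  also have "\<dots> = (\<Sum>q\<in>F. b q * term_op q (Res N A (\<lambda>i. lam (snd q i) - fst q (snd q i))))"
    by (rule sum.mono_neutral_left) (use F in auto)
  finally show ?thesis .
qed

lemma Res_comp_expansion:
  assumes A: "has_expansion N A" and B: "expansion N B h" and h0: "\<And>q. h q \<noteq> 0 \<Longrightarrow> fst q = (\<lambda>_. 0)"
  shows "\<exists>a. expansion N A a \<and> Res N (A \<circ> B) lam = (\<Sum>p\<in>{p. a p \<noteq> 0 \<and> fst p = lam}. a p * term_op p (B 1))"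
proof -
  obtain a where a: "expansion N A a" using A by (auto simp: has_expansion_def)
  let ?Sa = "{p. a p \<noteq> 0}" and ?Sh = "{q. h q \<noteq> 0}"
  have fa: "finite ?Sa" and fh: "finite ?Sh" using expansion_finite a B by auto
  have t1: "\<forall>q\<in>?Sh. term_op q 1 = 1" using expansion_admissible[OF B] admissible_term_op_field_hom field_hom_one by blast
  have B1: "B 1 = (\<Sum>q\<in>?Sh. h q)"
    using expansion_sum[OF B fh, of 1] t1 by simp
  have "Res N (A \<circ> B) lam = (\<Sum>pq\<in>{pq\<in>?Sa \<times> ?Sh. fst (term_mult (fst pq) (snd pq)) = lam}. a (fst pq) * term_op (fst pq) (h (snd pq)))"
    by (rule Res_comp[OF a B])
  also have "{pq\<in>?Sa \<times> ?Sh. fst (term_mult (fst pq) (snd pq)) = lam} = {p. a p \<noteq> 0 \<and> fst p = lam} \<times> ?Sh"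
  proof -
    have m: "\<And>p q. q \<in> ?Sh \<Longrightarrow> fst (term_mult p q) = fst p" using h0 by (simp add: term_mult_def)
    show ?thesis using m by auto
  qed
  also have "(\<Sum>pq\<in>{p. a p \<noteq> 0 \<and> fst p = lam} \<times> ?Sh. a (fst pq) * term_op (fst pq) (h (snd pq)))
      = (\<Sum>p\<in>{p. a p \<noteq> 0 \<and> fst p = lam}. \<Sum>q\<in>?Sh. a p * term_op p (h q))"
    by (simp add: sum.cartesian_product split_beta)
  also have "\<dots> = (\<Sum>p\<in>{p. a p \<noteq> 0 \<and> fst p = lam}. a p * term_op p (B 1))"
  proof (rule sum.cong[OF refl])
    fix p assume "p \<in> {p. a p \<noteq> 0 \<and> fst p = lam}"
    then have "admissible N p" using expansion_admissible[OF a] by auto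
    then show "(\<Sum>q\<in>?Sh. a p * term_op p (h q)) = a p * term_op p (B 1)"
      unfolding B1 using admissible_term_op_field_hom by (simp add: field_hom_sum sum_distrib_left)
  qed
  finally show ?thesis using a by blast
qed

lemma Res_comp_sop:
  assumes A: "has_expansion N A" and k: "1 \<le> k" "Suc k \<le> N"
  shows "Res N (A \<circ> sop k) = Res N A"
proof
  fix lam
  have h0: "\<And>q. sop_coeffs k q \<noteq> 0 \<Longrightarrow> fst q = (\<lambda>_. 0)" by (auto simp: sop_coeffs_def term_swap_def term_id_def split: if_splits)
  obtain a where a: "expansion N A a" and r: "Res N (A \<circ> sop k) lam = (\<Sum>p\<in>{p. a p \<noteq> 0 \<and> fst p = lam}. a p * term_op p (sop k 1))"
    using Res_comp_expansion[OF A expansion_sop[OF k] h0] by blast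
  have "sop k 1 = 1" by (simp add: sop_def sw_hom_simps)
  then show "Res N (A \<circ> sop k) lam = Res N A lam"
    unfolding r Res_alt[OF a]
    by (intro sum.cong) (auto dest!: expansion_admissible[OF a] admissible_term_op_field_hom simp: field_hom_one)
qed

lemma Res_comp_mult_const:
  assumes A: "expansion N A a"
  shows "Res N (A \<circ> (\<lambda>f. c * f)) lam = (\<Sum>p\<in>{p. a p \<noteq> 0 \<and> fst p = lam}. a p * term_op p c)"
proof -
  have h0: "\<And>q. (if q = term_id then c else 0) \<noteq> 0 \<Longrightarrow> fst q = (\<lambda>_. 0)" by (auto simp: term_id_def split: if_splits)
  obtain a' where a': "expansion N A a'" and r: "Res N (A \<circ> (\<lambda>f. c * f)) lam = (\<Sum>p\<in>{p. a' p \<noteq> 0 \<and> fst p = lam}. a' p * term_op p (c * 1))"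
    using Res_comp_expansion[of N A "\<lambda>f. c * f" _ lam, OF _ expansion_mult_const h0] A by (auto simp: has_expansion_def)
  have "a' = a" using expansion_unique[OF a' A] .
  then show ?thesis using r by simp
qed

lemma Res_sop_comp:
  assumes A: "has_expansion N A" and k: "1 \<le> k" "Suc k \<le> N"
  shows "Res N (sop k \<circ> A) lam = (1 + dl_coeff k) * sw k (Res N A (\<lambda>i. lam (adj_swap k i))) - dl_coeff k * Res N A lam"
proof -
  have "Res N (sop k \<circ> A) lam = (\<Sum>q\<in>{term_swap k, term_id}. sop_coeffs k q * term_op q (Res N A (\<lambda>i. lam (snd q i) - fst q (snd q i))))"
    by (rule Res_expansion_comp[OF expansion_sop[OF k] A]) (auto simp: sop_coeffs_def split: if_splits)
  then show ?thesis using term_swap_ne_term_id[of k]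
    by (simp add: sop_coeffs_def term_op_term_swap term_op_term_id) (simp add: term_swap_def term_id_def)
qed

lemma Res_term_op_comp:
  assumes q: "admissible N q" and A: "has_expansion N A"
  shows "Res N (term_op q \<circ> A) lam = term_op q (Res N A (\<lambda>i. lam (snd q i) - fst q (snd q i)))"
proof -
  have "Res N (term_op q \<circ> A) lam = (\<Sum>q'\<in>{q}. (if q' = q then 1 else 0) * term_op q' (Res N A (\<lambda>i. lam (snd q' i) - fst q' (snd q' i))))"
    by (rule Res_expansion_comp[OF expansion_term_op[OF q] A]) (auto split: if_splits)
  then show ?thesis by simp
qed

lemma Res_id: "Res N id lam = (if lam = (\<lambda>_. 0) then 1 else 0)"
proof -
  have e: "expansion N id (\<lambda>p. if p = term_id then 1 else 0)" using expansion_id unfolding id_def .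
  have "Res N id lam = (\<Sum>p\<in>{p. (if p = term_id then 1 else 0) \<noteq> (0::ratf) \<and> fst p = lam}. if p = term_id then 1 else 0)"
    by (rule Res_alt[OF e])
  also have "{p. (if p = term_id then 1 else 0) \<noteq> (0::ratf) \<and> fst p = lam} = (if lam = (\<lambda>_. 0) then {term_id} else {})"
    by (auto simp: term_id_def)
  finally show ?thesis by (cases "lam = (\<lambda>_. 0)") (simp_all add: term_id_def id_def)
qed

lemma widx_neS[simp]: "Suc 0 \<noteq> widx a" "0 \<noteq> widx a" by (simp_all add: widx_def)

lemma wv_diff_tt_nonzero:
  assumes "a \<noteq> b"
  shows "wv a - wv b - tt \<noteq> 0" "wv a - wv b + tt \<noteq> 0"
proof -
  let ?x = "\<lambda>v. if v = widx a then 1 else (0::complex)"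
  have "peval ?x (pvar (widx a) - pvar (widx b) - pvar 1) \<noteq> 0"
    using assms by (simp add: peval_def psubst_diff const_diff)
  then have "pvar (widx a) - pvar (widx b) - pvar 1 \<noteq> 0" by (rule peval_nonzero)
  then show "wv a - wv b - tt \<noteq> 0" by (simp add: of_poly_simps of_poly_eq_0_iff)
  have "peval ?x (pvar (widx a) - pvar (widx b) + pvar 1) \<noteq> 0"
    using assms by (simp add: peval_def psubst_diff psubst_add const_diff const_add)
  then have "pvar (widx a) - pvar (widx b) + pvar 1 \<noteq> 0" by (rule peval_nonzero)
  then show "wv a - wv b + tt \<noteq> 0" by (simp add: of_poly_simps of_poly_eq_0_iff)
qed

lemma prod_nonzero: "finite J \<Longrightarrow> (\<And>j. j \<in> J \<Longrightarrow> f j \<noteq> (0::ratf)) \<Longrightarrow> (\<Prod>j\<in>J. f j) \<noteq> 0"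
  by (simp add: prod_zero_iff)

lemma unitv_eq_iff[simp]: "unitv a = unitv b \<longleftrightarrow> a = b"
proof
  assume "unitv a = unitv b"
  then have "unitv a a = unitv b a" by simp
  then show "a = b" by (simp add: unitv_def split: if_splits)
qed simp

lemma unitv_comp_transpose_Suc: "(\<lambda>i. unitv j (adj_swap k i)) = unitv (adj_swap k j)"
  by (auto simp: unitv_def fun_eq_iff transpose_eq_iff)

lemma Res_schain:
  assumes "k < N"
  shows "has_expansion N (schain k) \<and> Res N (schain k) lam = (if lam = (\<lambda>_. 0) then 1 else 0)"
  using assms
proof (induction k arbitrary: lam)
  case 0 then show ?case by (simp only: schain.simps(1) has_expansion_id Res_id)
next
  case (Suc k)
  have k: "1 \<le> Suc k" "Suc (Suc k) \<le> N" using Suc by auto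
  have hx: "has_expansion N (schain k)" using Suc by auto
  have e: "schain (Suc k) = sop (Suc k) \<circ> schain k" by simp
  have z: "(\<lambda>i. lam (adj_swap (Suc k) i)) = (\<lambda>_. 0) \<longleftrightarrow> lam = (\<lambda>_. 0)"
  proof
    assume h: "(\<lambda>i. lam (adj_swap (Suc k) i)) = (\<lambda>_. 0)"
    show "lam = (\<lambda>_. 0)"
    proof
      fix i have "lam (adj_swap (Suc k) (adj_swap (Suc k) i)) = 0" using fun_cong[OF h, of "adj_swap (Suc k) i"] by simp
      then show "lam i = 0" by simp
    qed
  qed simp
  have "Res N (schain (Suc k)) lam = (1 + dl_coeff (Suc k)) * sw (Suc k) (Res N (schain k) (\<lambda>i. lam (adj_swap (Suc k) i)))
           - dl_coeff (Suc k) * Res N (schain k) lam"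
    unfolding e by (rule Res_sop_comp[OF hx k])
  also have "\<dots> = (if lam = (\<lambda>_. 0) then 1 else 0)"
    using Suc.IH[of lam] Suc.IH[of "\<lambda>i. lam (adj_swap (Suc k) i)"] Suc.prems z by (simp add: sw_hom_simps)
  finally have r: "Res N (schain (Suc k)) lam = (if lam = (\<lambda>_. 0) then 1 else 0)" .
  moreover have "has_expansion N (schain (Suc k))" unfolding e by (rule has_expansion_comp[OF has_expansion_sop[OF k] hx])
  ultimately show ?case by blast
qed

lemma rot_comp_eq_iff: assumes "1 \<le> N" shows "(\<lambda>i. lam (rot N i)) = (\<lambda>i. mu (rot N i)) \<longleftrightarrow> lam = mu"
proof
  assume h: "(\<lambda>i. lam (rot N i)) = (\<lambda>i. mu (rot N i))"
  show "lam = mu"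
  proof
    fix i have "lam (rot N (rot_inv N i)) = mu (rot N (rot_inv N i))" using fun_cong[OF h, of "rot_inv N i"] by simp
    then show "lam i = mu i" using rot_rot_inv[OF assms] by simp
  qed
qed simp

lemma one_plus_dl_coeff:
  "1 + dl_coeff k = (wv k - wv (Suc k) + tt) / (wv k - wv (Suc k))"
  "1 + dl_coeff k = (wv (Suc k) - wv k - tt) / (wv (Suc k) - wv k)"
proof -
  have "wv k - wv (Suc k) \<noteq> 0" "wv (Suc k) - wv k \<noteq> 0" by (rule wv_ne; simp)+
  then show "1 + dl_coeff k = (wv k - wv (Suc k) + tt) / (wv k - wv (Suc k))"
    "1 + dl_coeff k = (wv (Suc k) - wv k - tt) / (wv (Suc k) - wv k)"
    by (simp_all add: dl_coeff_def field_simps)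
qed

lemma Res_sop_conj:
  assumes "has_expansion N A" "1 \<le> k" "Suc k \<le> N"
  shows "has_expansion N (sop k \<circ> A \<circ> sop k) \<and>
         Res N (sop k \<circ> A \<circ> sop k) lam =
           (1 + dl_coeff k) * sw k (Res N A (\<lambda>i. lam (adj_swap k i))) - dl_coeff k * Res N A lam"
proof -
  have hx: "has_expansion N (sop k \<circ> A)" by (rule has_expansion_comp[OF has_expansion_sop[OF assms(2,3)] assms(1)])
  show ?thesis
    using has_expansion_comp[OF hx has_expansion_sop[OF assms(2,3)]]
      Res_comp_sop[OF hx assms(2,3)] Res_sop_comp[OF assms] by simp
qed

lemma Xop_Suc: "1 \<le> i \<Longrightarrow> Xop N (Suc i) = sop i \<circ> Xop N i \<circ> sop i"
  by (cases i) auto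

lemma Res_Xop_1:
  assumes "1 \<le> N"
  shows "has_expansion N (Xop N 1) \<and> Res N (Xop N 1) lam = (if lam = unitv 1 then 1 else 0)"
proof -
  have e: "Xop N 1 = term_op (pi_term N) \<circ> schain (N - 1)" by (simp add: piop_term_op[OF assms])
  have S: "has_expansion N (schain (N - 1))" "\<And>mu. Res N (schain (N - 1)) mu = (if mu = (\<lambda>_. 0) then 1 else 0)"
    using Res_schain[of "N - 1" N] assms by auto
  have "Res N (Xop N 1) lam = term_op (pi_term N) (Res N (schain (N - 1)) (\<lambda>i. lam (rot N i) - unitv 1 (rot N i)))"
    unfolding e using Res_term_op_comp[OF admissible_pi_term[OF assms] S(1)] by (simp add: pi_term_def)
  also have "\<dots> = (if lam = unitv 1 then 1 else 0)"
  proof -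
    have "(\<lambda>i. lam (rot N i) - unitv 1 (rot N i)) = (\<lambda>_. 0) \<longleftrightarrow> (\<lambda>i. lam (rot N i)) = (\<lambda>i. unitv 1 (rot N i))"
      by (auto simp: fun_eq_iff)
    then show ?thesis using S(2) rot_comp_eq_iff[OF assms, of lam "unitv 1"]
      admissible_term_op_field_hom[OF admissible_pi_term[OF assms]] by (simp add: field_hom_one field_hom_zero)
  qed
  finally show ?thesis unfolding e
    using has_expansion_comp[OF has_expansion_term_op[OF admissible_pi_term[OF assms]] S(1)] by blast
qed

lemma has_expansion_Xop: "1 \<le> i \<Longrightarrow> i \<le> N \<Longrightarrow> has_expansion N (Xop N i)"
proof (induction i rule: nat_induct_at_least)
  case base then show ?case using Res_Xop_1 by blast
next
  case (Suc i)
  then have "has_expansion N (sop i \<circ> Xop N i \<circ> sop i)" using Res_sop_conj by simp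
  then show ?case by (simp only: Xop_Suc[OF Suc.hyps(1)])
qed

lemma Res_Xop_Suc:
  assumes "1 \<le> i" "Suc i \<le> N"
  shows "Res N (Xop N (Suc i)) lam =
    (1 + dl_coeff i) * sw i (Res N (Xop N i) (\<lambda>j. lam (adj_swap i j))) - dl_coeff i * Res N (Xop N i) lam"
proof -
  have "has_expansion N (Xop N i)" using assms by (simp add: has_expansion_Xop)
  then show ?thesis unfolding Xop_Suc[OF assms(1)] using Res_sop_conj assms by blast
qed

lemma Res_Xop_support:
  assumes "1 \<le> i" "i \<le> N" "Res N (Xop N i) lam \<noteq> 0"
  shows "\<exists>j\<in>{1..i}. lam = unitv j"
  using assms
proof (induction i arbitrary: lam rule: nat_induct_at_least)
  case base then show ?case using Res_Xop_1[of N lam] by (auto simp del: Xop.simps split: if_splits)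
next
  case (Suc i)
  have i: "i \<le> N" using Suc.prems(1) by simp
  have "Res N (Xop N i) (\<lambda>j. lam (adj_swap i j)) \<noteq> 0 \<or> Res N (Xop N i) lam \<noteq> 0"
    using Suc.prems Res_Xop_Suc[OF Suc.hyps(1)] by (auto simp: sw_hom_simps)
  then show ?case
  proof
    assume "Res N (Xop N i) (\<lambda>j. lam (adj_swap i j)) \<noteq> 0"
    then obtain j where j: "j \<in> {1..i}" "(\<lambda>m. lam (adj_swap i m)) = unitv j" using Suc.IH[OF i] by blast
    have "lam = unitv (adj_swap i j)"
    proof
      fix m
      have "lam m = unitv j (adj_swap i m)" using fun_cong[OF j(2), of "adj_swap i m"] by simp
      then show "lam m = unitv (adj_swap i j) m" using fun_cong[OF unitv_comp_transpose_Suc[of j i], of m] by simp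
    qed
    moreover have "adj_swap i j \<in> {1..Suc i}" using j(1) by (auto simp: Transposition.transpose_def)
    ultimately show ?thesis by blast
  next
    assume "Res N (Xop N i) lam \<noteq> 0"
    then obtain j where "j \<in> {1..i}" "lam = unitv j" using Suc.IH[OF i] by blast
    then show ?thesis by (intro bexI[of _ j]) auto
  qed
qed

definition X_leading :: "nat \<Rightarrow> ratf" where
  "X_leading i = (\<Prod>j\<in>{1..i} - {i}. (wv i - wv j - tt) / (wv i - wv j))"

lemma X_leading_Suc:
  assumes "1 \<le> i"
  shows "X_leading (Suc i) = (1 + dl_coeff i) * sw i (X_leading i)"
proof -
  have "sw i (X_leading i) = (\<Prod>j\<in>{1..<i}. (wv (Suc i) - wv j - tt) / (wv (Suc i) - wv j))"
    unfolding X_leading_def field_hom_prod[OF sw_field_hom]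
    by (rule prod.cong) (auto simp: sw_hom_simps sw_wv_other)
  moreover have "{1..Suc i} - {Suc i} = insert i {1..<i}" using assms by auto
  ultimately show ?thesis by (simp add: X_leading_def one_plus_dl_coeff(2))
qed

lemma Res_Xop_leading:
  assumes "1 \<le> i" "i \<le> N"
  shows "Res N (Xop N i) (unitv i) = X_leading i"
  using assms
proof (induction i rule: nat_induct_at_least)
  case base then show ?case using Res_Xop_1[of N] by (simp add: X_leading_def del: Xop.simps)
next
  case (Suc i)
  have "Res N (Xop N i) (unitv (Suc i)) = 0" using Res_Xop_support[of i N "unitv (Suc i)"] Suc by auto
  moreover have "(\<lambda>j. unitv (Suc i) (adj_swap i j)) = unitv i" by (simp add: unitv_comp_transpose_Suc)
  ultimately show ?case using Suc by (simp add: Res_Xop_Suc X_leading_Suc)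
qed

lemma term_mult_term_id: "term_mult term_id p = p"
  by (simp add: term_mult_def term_id_def)

lemma term_mult_term_swap: "term_mult (term_swap k) p = ((\<lambda>i. fst p (adj_swap k i)), adj_swap k \<circ> snd p)"
  by (simp add: term_mult_def term_swap_def)

lemma term_conv_nonzero:
  assumes "term_conv g h r \<noteq> 0"
  shows "\<exists>q p. g q \<noteq> 0 \<and> h p \<noteq> 0 \<and> term_mult q p = r"
proof -
  have "{pq\<in>{p. g p \<noteq> 0} \<times> {q. h q \<noteq> 0}. term_mult (fst pq) (snd pq) = r} \<noteq> {}"
  proof
    assume e: "{pq\<in>{p. g p \<noteq> 0} \<times> {q. h q \<noteq> 0}. term_mult (fst pq) (snd pq) = r} = {}"
    have "term_conv g h r = 0" unfolding term_conv_def e by simp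
    with assms show False by contradiction
  qed
  then show ?thesis by auto
qed

lemma neg_unitv_eq_iff: "- unitv a = - unitv b \<longleftrightarrow> a = b"
proof
  assume "- unitv a = - unitv b"
  from fun_cong[OF this, of a] show "a = b" by (simp add: unitv_def split: if_splits)
qed simp

text \<open>Every term u^lam sigma in the expansion of s_i ... s_(N-1) pi^-1 has lam = -e_(sigma 1) with
  sigma 1 \<ge> i; this shape is what pins down both the support and the leading coefficient.\<close>
definition inverse_shaped :: "nat \<Rightarrow> (shift_perm \<Rightarrow> ratf) \<Rightarrow> bool" where
  "inverse_shaped i g \<longleftrightarrow> (\<forall>p. g p \<noteq> 0 \<longrightarrow> fst p = - unitv (snd p 1) \<and> i \<le> snd p 1)"

lemma inverse_shaped_sop:
  assumes "inverse_shaped (Suc n) g"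
  shows "inverse_shaped n (term_conv (sop_coeffs n) g)"
  unfolding inverse_shaped_def
proof (intro allI impI)
  fix r assume "term_conv (sop_coeffs n) g r \<noteq> 0"
  then obtain q p where qp: "sop_coeffs n q \<noteq> 0" "g p \<noteq> 0" "term_mult q p = r" using term_conv_nonzero by blast
  have pp: "fst p = - unitv (snd p 1)" "Suc n \<le> snd p 1" using assms qp(2) unfolding inverse_shaped_def by blast+
  have "q = term_swap n \<or> q = term_id" using qp(1) by (auto simp: sop_coeffs_def split: if_splits)
  then show "fst r = - unitv (snd r 1) \<and> n \<le> snd r 1"
  proof
    assume "q = term_id" then show ?thesis using qp(3) pp by (auto simp: term_mult_term_id)
  next
    assume q: "q = term_swap n"
    have r: "r = ((\<lambda>i. fst p (adj_swap n i)), adj_swap n \<circ> snd p)" using qp(3) q by (simp add: term_mult_term_swap)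
    have "(\<lambda>i. fst p (adj_swap n i)) = - unitv (adj_swap n (snd p 1))"
      using pp(1) fun_cong[OF unitv_comp_transpose_Suc[of "snd p 1" n]] by (auto simp: fun_eq_iff)
    moreover have "n \<le> adj_swap n (snd p 1)" using pp(2) by (auto simp: Transposition.transpose_def)
    ultimately show ?thesis using r by simp
  qed
qed

lemma Xinv_normal_expansion:
  assumes "1 \<le> i" "i \<le> N"
  shows "\<exists>g. expansion N (Xinv_normal N i) g \<and> inverse_shaped i g"
  using assms(2)
proof (induction i rule: inc_induct)
  case base
  have N: "1 \<le> N" using assms by simp
  have "inverse_shaped N (\<lambda>p. if p = pi_inv_term N then 1 else 0)"
    by (simp add: inverse_shaped_def pi_inv_term_def rot_inv_def)
  then show ?case using expansion_term_op[OF admissible_pi_inv_term[OF N]] by (auto simp: Xinv_normal_last pi_inv_def)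
next
  case (step n)
  have k: "1 \<le> n" "Suc n \<le> N" using step assms by auto
  obtain g where g: "expansion N (Xinv_normal N (Suc n)) g" "inverse_shaped (Suc n) g" using step by blast
  have "expansion N (Xinv_normal N n) (term_conv (sop_coeffs n) g)"
    unfolding Xinv_normal_step[of n N, OF step.hyps(2)] by (rule expansion_comp[OF expansion_sop[OF k] g(1)])
  then show ?case using inverse_shaped_sop[OF g(2)] by blast
qed

lemma has_expansion_Xinv_normal: "1 \<le> i \<Longrightarrow> i \<le> N \<Longrightarrow> has_expansion N (Xinv_normal N i)"
  using Xinv_normal_expansion unfolding has_expansion_def by blast

lemma inverse_shaped_term:
  assumes "expansion N A g" "inverse_shaped i g" "g p \<noteq> 0" "1 \<le> N"
  shows "snd p 1 \<in> {i..N} \<and> fst p = - unitv (snd p 1)"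
proof -
  have "snd p permutes {1..N}" using expansion_admissible[OF assms(1,3)] by (simp add: admissible_def)
  then have "snd p 1 \<in> {1..N}" using permutes_in_image assms(4) by fastforce
  moreover have "fst p = - unitv (snd p 1) \<and> i \<le> snd p 1" using assms(2,3) unfolding inverse_shaped_def by blast
  ultimately show ?thesis by auto
qed

lemma Res_Xinv_normal_support:
  assumes "1 \<le> i" "i \<le> N" "Res N (Xinv_normal N i) lam \<noteq> 0"
  shows "\<exists>j\<in>{i..N}. lam = - unitv j"
proof -
  obtain g where g: "expansion N (Xinv_normal N i) g" "inverse_shaped i g"
    using Xinv_normal_expansion[OF assms(1,2)] by blast
  have "(\<Sum>p\<in>{p. g p \<noteq> 0 \<and> fst p = lam}. g p) \<noteq> 0" using assms(3) Res_alt[OF g(1)] by simp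
  then obtain p where p: "g p \<noteq> 0" "fst p = lam" using sum.not_neutral_contains_not_neutral by blast
  have "snd p 1 \<in> {i..N} \<and> fst p = - unitv (snd p 1)" using inverse_shaped_term[OF g p(1)] assms(1,2) by simp
  then show ?thesis using p(2) by (intro bexI[of _ "snd p 1"]) auto
qed

definition Xinv_leading :: "nat \<Rightarrow> nat \<Rightarrow> ratf" where
  "Xinv_leading N i = (\<Prod>j\<in>{i<..N}. (wv i - wv j + tt) / (wv i - wv j))"

lemma Xinv_leading_step:
  assumes "i < N"
  shows "Xinv_leading N i = (1 + dl_coeff i) * sw i (Xinv_leading N (Suc i))"
proof -
  have "sw i (Xinv_leading N (Suc i)) = (\<Prod>j\<in>{Suc i<..N}. (wv i - wv j + tt) / (wv i - wv j))"
    unfolding Xinv_leading_def field_hom_prod[OF sw_field_hom]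
    by (rule prod.cong) (auto simp: sw_hom_simps sw_wv_other)
  moreover have "{i<..N} = insert (Suc i) {Suc i<..N}" using assms by auto
  ultimately show ?thesis by (simp add: Xinv_leading_def one_plus_dl_coeff(1))
qed

lemma Res_Xinv_normal_leading:
  assumes "1 \<le> i" "i \<le> N"
  shows "Res N (Xinv_normal N i) (- unitv i) = Xinv_leading N i"
  using assms(2)
proof (induction i rule: inc_induct)
  case base
  have N: "1 \<le> N" using assms by simp
  have "Res N (Xinv_normal N N) (- unitv N) =
      (\<Sum>p\<in>{p. (if p = pi_inv_term N then 1 else 0) \<noteq> (0::ratf) \<and> fst p = - unitv N}. if p = pi_inv_term N then 1 else 0)"
    unfolding Xinv_normal_last pi_inv_def by (rule Res_alt[OF expansion_term_op[OF admissible_pi_inv_term[OF N]]])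
  also have "{p. (if p = pi_inv_term N then 1 else 0) \<noteq> (0::ratf) \<and> fst p = - unitv N} = {pi_inv_term N}"
    by (auto simp: pi_inv_term_def)
  finally show ?case by (simp add: Xinv_leading_def)
next
  case (step i)
  have k: "1 \<le> i" "Suc i \<le> N" using step assms by auto
  have hx: "has_expansion N (Xinv_normal N (Suc i))" using k by (intro has_expansion_Xinv_normal) auto
  have zero: "Res N (Xinv_normal N (Suc i)) (- unitv i) = 0"
    using Res_Xinv_normal_support[of "Suc i" N "- unitv i"] k by (auto simp: neg_unitv_eq_iff)
  have swap: "(\<lambda>j. (- unitv i) (adj_swap i j)) = - unitv (Suc i)"
    using unitv_comp_transpose_Suc[of i i] by (simp add: fun_eq_iff)
  have "Res N (Xinv_normal N i) (- unitv i) = Res N (sop i \<circ> Xinv_normal N (Suc i)) (- unitv i)"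
    using k by (simp add: Xinv_normal_step del: Res_def)
  also have "\<dots> = (1 + dl_coeff i) * sw i (Res N (Xinv_normal N (Suc i)) (\<lambda>j. (- unitv i) (adj_swap i j)))
      - dl_coeff i * Res N (Xinv_normal N (Suc i)) (- unitv i)"
    by (rule Res_sop_comp[OF hx k])
  also have "\<dots> = Xinv_leading N i"
    unfolding zero swap step.IH using k by (simp add: Xinv_leading_step)
  finally show ?case .
qed

lemma Res_sop_comp_cong:
  assumes "has_expansion N A" "has_expansion N B" "Res N A = Res N B" "1 \<le> k" "Suc k \<le> N"
  shows "Res N (sop k \<circ> A) = Res N (sop k \<circ> B)"
  using Res_sop_comp[OF assms(1,4,5)] Res_sop_comp[OF assms(2,4,5)] assms(3) by (simp add: fun_eq_iff)

lemma sop_Xinv_normal: "1 \<le> i \<Longrightarrow> Suc i \<le> N \<Longrightarrow> sop i \<circ> Xinv_normal N i = Xinv_normal N (Suc i)"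
  by (simp add: Xinv_normal_step fun_eq_iff)

text \<open>Both X_i^-1 and Y_i arise from their i = 1 instance by conjugation with s_i; under Res this
  conjugation only sees the left factor s_i, so Res of either is that of s_i ... s_(N-1) pi^-1 c.\<close>
lemma Res_sop_conj_chain:
  assumes step: "\<And>i. 1 \<le> i \<Longrightarrow> Suc i \<le> N \<Longrightarrow> A (Suc i) = sop i \<circ> A i \<circ> sop i"
    and base: "has_expansion N (A 1)" "Res N (A 1) = Res N (Xinv_normal N 1 \<circ> (\<lambda>f. c * f))"
    and i: "1 \<le> i" "i \<le> N"
  shows "has_expansion N (A i) \<and> Res N (A i) = Res N (Xinv_normal N i \<circ> (\<lambda>f. c * f))"
  using i
proof (induction i rule: nat_induct_at_least)
  case base show ?case using assms(2,3) by (rule conjI)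
next
  case (Suc i)
  have k: "1 \<le> i" "Suc i \<le> N" using Suc by auto
  have IH: "has_expansion N (A i)" "Res N (A i) = Res N (Xinv_normal N i \<circ> (\<lambda>f. c * f))"
    using Suc.IH[OF Suc_leD[OF k(2)]] by blast+
  have hx: "has_expansion N (Xinv_normal N i \<circ> (\<lambda>f. c * f))"
    using has_expansion_comp[OF has_expansion_Xinv_normal has_expansion_mult_const] k by simp
  have "Res N (A (Suc i)) = Res N (sop i \<circ> A i)"
    using Res_sop_conj[OF IH(1) k] Res_sop_comp[OF IH(1) k] by (simp add: step[OF k] fun_eq_iff)
  also have "\<dots> = Res N (sop i \<circ> (Xinv_normal N i \<circ> (\<lambda>f. c * f)))"
    by (rule Res_sop_comp_cong[OF IH(1) hx IH(2) k])
  also have "sop i \<circ> (Xinv_normal N i \<circ> (\<lambda>f. c * f)) = Xinv_normal N (Suc i) \<circ> (\<lambda>f. c * f)"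
    by (simp only: o_assoc sop_Xinv_normal[OF k])
  finally have "Res N (A (Suc i)) = Res N (Xinv_normal N (Suc i) \<circ> (\<lambda>f. c * f))" .
  moreover have "has_expansion N (A (Suc i))" unfolding step[OF k] using Res_sop_conj[OF IH(1) k] by blast
  ultimately show ?case by blast
qed

lemma Xinv_Suc: "1 \<le> N \<Longrightarrow> 1 \<le> i \<Longrightarrow> Xinv N (Suc i) = sop i \<circ> Xinv N i \<circ> sop i"
  by (cases i) (simp_all add: Xinv_eq_Xinv_word)

lemma Res_Xinv:
  assumes "1 \<le> i" "i \<le> N"
  shows "has_expansion N (Xinv N i) \<and> Res N (Xinv N i) = Res N (Xinv_normal N i)"
proof -
  have X1: "Xinv N 1 = Xinv_normal N 1" using assms Xinv_eq_Xinv_word[of N 0] Xinv_word_1 by simp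
  have "(\<lambda>g. Xinv_normal N j (1 * g)) = Xinv_normal N j" for j by simp
  then show ?thesis
    using Res_sop_conj_chain[of N "Xinv N" 1 i] Xinv_Suc has_expansion_Xinv_normal[of 1 N] X1 assms
    by (simp add: comp_def)
qed

lemma Res_Yop:
  assumes "1 \<le> i" "i \<le> N"
  shows "has_expansion N (Yop N l \<epsilon> i) \<and> Res N (Yop N l \<epsilon> i) = Res N (Xinv_normal N i \<circ> (\<lambda>f. Y_factor l \<epsilon> * f))"
proof -
  have step: "Yop N l \<epsilon> (Suc j) = sop j \<circ> Yop N l \<epsilon> j \<circ> sop j" if "1 \<le> j" "Suc j \<le> N" for j
    using Yop_Suc_conj[OF that] by (simp add: fun_eq_iff)
  have Y1: "Yop N l \<epsilon> 1 = Xinv_normal N 1 \<circ> (\<lambda>f. Y_factor l \<epsilon> * f)"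
    using Yop1_eq assms by (simp add: fun_eq_iff)
  have hx: "has_expansion N (Xinv_normal N 1 \<circ> (\<lambda>f. Y_factor l \<epsilon> * f))"
    by (rule has_expansion_comp[OF has_expansion_Xinv_normal has_expansion_mult_const]) (use assms in auto)
  show ?thesis by (rule Res_sop_conj_chain[OF step]) (simp_all only: Y1 hx assms)
qed

definition Y_factor_at :: "nat \<Rightarrow> complex \<Rightarrow> nat \<Rightarrow> ratf" where
  "Y_factor_at l \<epsilon> m = (\<Prod>k\<in>{1..l}. wv m - hb - zk l \<epsilon> k)"

lemma term_op_Y_factor:
  assumes "admissible N p" "fst p = - unitv (snd p 1)"
  shows "term_op p (Y_factor l \<epsilon>) = Y_factor_at l \<epsilon> (snd p 1)"
proof -
  have h: "field_hom (term_op p)" using admissible_term_op_field_hom assms(1) by blast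
  have perm: "snd p permutes {1..N}" using assms(1) by (simp add: admissible_def)
  have w: "term_op p (wv (Suc 0)) = wv (snd p (Suc 0)) - hb"
    using term_op_wv[OF perm, of "Suc 0"] assms(2) by (simp add: unitv_def)
  show ?thesis unfolding Y_factor_def Y_factor_at_def field_hom_prod[OF h]
    by (rule prod.cong[OF refl]) (simp add: field_hom_diff[OF h] w term_op_zk[OF assms(1)])
qed

lemma Res_Xinv_normal_comp_mult_support:
  assumes "1 \<le> i" "i \<le> N" "Res N (Xinv_normal N i \<circ> (\<lambda>f. c * f)) lam \<noteq> 0"
  shows "\<exists>j\<in>{i..N}. lam = - unitv j"
proof -
  obtain g where g: "expansion N (Xinv_normal N i) g" "inverse_shaped i g"
    using Xinv_normal_expansion[OF assms(1,2)] by blast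
  have "(\<Sum>p\<in>{p. g p \<noteq> 0 \<and> fst p = lam}. g p * term_op p c) \<noteq> 0"
    using assms(3) Res_comp_mult_const[OF g(1)] by simp
  then obtain p where p: "g p \<noteq> 0" "fst p = lam" using sum.not_neutral_contains_not_neutral by blast
  have "snd p 1 \<in> {i..N} \<and> fst p = - unitv (snd p 1)" using inverse_shaped_term[OF g p(1)] assms(1,2) by simp
  then show ?thesis using p(2) by (intro bexI[of _ "snd p 1"]) auto
qed

lemma Res_Xinv_normal_comp_mult:
  assumes "1 \<le> i" "i \<le> N"
    and C: "\<And>p. admissible N p \<Longrightarrow> fst p = - unitv (snd p 1) \<Longrightarrow> term_op p c = C (snd p 1)"
  shows "Res N (Xinv_normal N i \<circ> (\<lambda>f. c * f)) (- unitv m) = C m * Res N (Xinv_normal N i) (- unitv m)"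
proof -
  obtain g where g: "expansion N (Xinv_normal N i) g" "inverse_shaped i g"
    using Xinv_normal_expansion[OF assms(1,2)] by blast
  have "Res N (Xinv_normal N i \<circ> (\<lambda>f. c * f)) (- unitv m) = (\<Sum>p\<in>{p. g p \<noteq> 0 \<and> fst p = - unitv m}. g p * C m)"
    unfolding Res_comp_mult_const[OF g(1)]
  proof (rule sum.cong[OF refl])
    fix p assume p: "p \<in> {p. g p \<noteq> 0 \<and> fst p = - unitv m}"
    then have "fst p = - unitv (snd p 1)" "snd p 1 = m"
      using inverse_shaped_term[OF g, of p] assms(1,2) by (auto simp: neg_unitv_eq_iff)
    then show "g p * term_op p c = g p * C m" using C[OF expansion_admissible[OF g(1)]] p by auto
  qed
  also have "\<dots> = C m * Res N (Xinv_normal N i) (- unitv m)"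
    unfolding Res_alt[OF g(1)] by (simp add: sum_distrib_left mult.commute)
  finally show ?thesis .
qed

lemma Res_Xinv_support:
  assumes "1 \<le> i" "i \<le> N" "Res N (Xinv N i) lam \<noteq> 0"
  shows "\<exists>j\<in>{i..N}. lam = - unitv j"
proof -
  have "Res N (Xinv N i) = Res N (Xinv_normal N i)" using Res_Xinv[OF assms(1,2)] by blast
  then show ?thesis using Res_Xinv_normal_support[OF assms(1,2)] assms(3) by metis
qed

lemma Res_Xinv_leading:
  assumes "1 \<le> i" "i \<le> N"
  shows "Res N (Xinv N i) (- unitv i) = Xinv_leading N i"
  using Res_Xinv[OF assms] Res_Xinv_normal_leading[OF assms] by simp

lemma Res_Yop_support:
  assumes "1 \<le> i" "i \<le> N" "Res N (Yop N l \<epsilon> i) lam \<noteq> 0"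
  shows "\<exists>j\<in>{i..N}. lam = - unitv j"
proof -
  have "Res N (Yop N l \<epsilon> i) = Res N (Xinv_normal N i \<circ> (\<lambda>f. Y_factor l \<epsilon> * f))"
    using Res_Yop[OF assms(1,2)] by blast
  then show ?thesis using Res_Xinv_normal_comp_mult_support[OF assms(1,2)] assms(3) by metis
qed

lemma Res_Yop_leading:
  assumes "1 \<le> i" "i \<le> N"
  shows "Res N (Yop N l \<epsilon> i) (- unitv i) = Y_factor_at l \<epsilon> i * Xinv_leading N i"
proof -
  have "Res N (Yop N l \<epsilon> i) = Res N (Xinv_normal N i \<circ> (\<lambda>f. Y_factor l \<epsilon> * f))"
    using Res_Yop[OF assms] by blast
  then show ?thesis
    by (simp only: Res_Xinv_normal_comp_mult[OF assms term_op_Y_factor] Res_Xinv_normal_leading[OF assms])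
qed

lemma X_leading_nonzero: "X_leading i \<noteq> 0"
  unfolding X_leading_def
proof (rule prod_nonzero)
  fix j assume "j \<in> {1..i} - {i}"
  then have ij: "i \<noteq> j" by auto
  have a: "wv i - wv j - tt \<noteq> 0" by (rule wv_diff_tt_nonzero[OF ij])
  have b: "wv i - wv j \<noteq> 0" by (rule wv_ne[OF ij])
  show "(wv i - wv j - tt) / (wv i - wv j) \<noteq> 0" using a b by (simp only: divide_eq_0_iff) blast
qed simp

lemma Xinv_leading_nonzero: "Xinv_leading N i \<noteq> 0"
  unfolding Xinv_leading_def
proof (rule prod_nonzero)
  fix j assume "j \<in> {i<..N}"
  then have ij: "i \<noteq> j" by auto
  have a: "wv i - wv j + tt \<noteq> 0" by (rule wv_diff_tt_nonzero[OF ij])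
  have b: "wv i - wv j \<noteq> 0" by (rule wv_ne[OF ij])
  show "(wv i - wv j + tt) / (wv i - wv j) \<noteq> 0" using a b by (simp only: divide_eq_0_iff) blast
qed simp

lemma of_poly_sum: "of_poly (\<Sum>j\<in>J. f j) = (\<Sum>j\<in>J. of_poly (f j))"
  by (induction J rule: infinite_finite_induct) (auto simp: of_poly_0 of_poly_add)

lemma cidx_ne_widx: "cidx a \<noteq> widx b"
  by (simp add: cidx_def widx_def) presburger

lemma zk_of_poly: "zk l \<epsilon> k = of_poly (- Poly_Mapping.single 0 (1 / of_nat l) *
    (of_nat (l - k) * pvar 0 + (\<Sum>m = 1..l - 1. Poly_Mapping.single 0 (\<Sum>a<k. \<epsilon> ^ (a * m)) * pvar (cidx m))))"
proof -
  have a: "of_poly (pvar 0) = hb" "of_poly (pvar (cidx m)) = cv m" "of_poly (Poly_Mapping.single 0 z) = cst z" for m z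
    by (simp_all add: hb_of_poly cv_of_poly cst_of_poly)
  show ?thesis by (simp add: zk_def of_poly_add of_poly_mult of_poly_uminus of_poly_sum of_poly_of_nat a)
qed

lemma Y_factor_at_nonzero: "Y_factor_at l \<epsilon> m \<noteq> 0"
  unfolding Y_factor_at_def
proof (rule prod_nonzero)
  fix k
  let ?Z = "- Poly_Mapping.single 0 (1 / of_nat l) *
    (of_nat (l - k) * pvar 0 + (\<Sum>m = 1..l - 1. Poly_Mapping.single 0 (\<Sum>a<k. \<epsilon> ^ (a * m)) * pvar (cidx m)))"
  let ?x = "\<lambda>v. if v = widx m then 1 else (0::complex)"
  have TT: "wv m - hb - zk l \<epsilon> k = of_poly (pvar (widx m) - pvar 0 - ?Z)"
    by (simp only: zk_of_poly wv_of_poly hb_of_poly of_poly_diff)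
  have Z0: "peval ?x ?Z = 0"
    by (simp add: peval_def psubst_mult psubst_add psubst_sum psubst_uminus psubst_const cidx_ne_widx
        mult_single flip: single_of_nat)
  have "peval ?x (pvar (widx m) - pvar 0 - ?Z) = peval ?x (pvar (widx m)) - peval ?x (pvar 0) - peval ?x ?Z"
    by (simp only: peval_def psubst_diff)
  also have "\<dots> = Poly_Mapping.single 0 1" unfolding Z0 by (simp add: peval_pvar)
  finally have "peval ?x (pvar (widx m) - pvar 0 - ?Z) \<noteq> 0" by simp
  then have "pvar (widx m) - pvar 0 - ?Z \<noteq> 0" by (rule peval_nonzero)
  then show "wv m - hb - zk l \<epsilon> k \<noteq> 0" unfolding TT by (simp only: of_poly_eq_0_iff not_False_eq_True)
qed simp

section \<open>Leading terms\<close>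

lemma unitv_comp_transpose: "(\<lambda>i. unitv j (Transposition.transpose a b i)) = unitv (Transposition.transpose a b j)"
  by (auto simp: unitv_def fun_eq_iff transpose_eq_iff)

lemma domw_unitv:
  assumes "1 \<le> j" "j \<le> N"
  shows "domw N (unitv j) = unitv 1"
  unfolding domw_def
proof (rule the_equality)
  have "unitv 1 = unitv j \<circ> Transposition.transpose 1 j"
    using unitv_comp_transpose[of j 1 j] by (simp add: o_def)
  moreover have "Transposition.transpose 1 j permutes {1..N}" using assms by (intro permutes_swap_id) auto
  moreover have "dominant N (unitv 1)" using assms by (auto simp: dominant_def wts_def unitv_def)
  ultimately show "dominant N (unitv 1) \<and> (\<exists>\<sigma>. \<sigma> permutes {1..N} \<and> unitv 1 = unitv j \<circ> \<sigma>)" by blast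
next
  fix mu assume "dominant N mu \<and> (\<exists>\<sigma>. \<sigma> permutes {1..N} \<and> mu = unitv j \<circ> \<sigma>)"
  then obtain \<sigma> where d: "dominant N mu" and s: "\<sigma> permutes {1..N}" and m: "mu = unitv j \<circ> \<sigma>" by blast
  define k0 where "k0 = inv \<sigma> j"
  have sk0: "\<sigma> k0 = j" unfolding k0_def using s by (simp add: permutes_inverses(1))
  have k0: "k0 \<in> {1..N}" using s assms sk0 by (metis atLeastAtMost_iff permutes_in_image)
  have "mu k0 \<le> mu 1" using d k0 unfolding dominant_def by auto
  then have "mu 1 = 1" using sk0 m by (auto simp: unitv_def split: if_splits)
  then have s1: "\<sigma> 1 = j" using m by (auto simp: unitv_def split: if_splits)
  have inj: "inj \<sigma>" using s by (simp add: permutes_inj)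
  show "mu = unitv 1"
  proof
    fix k show "mu k = unitv 1 k" using m s1 inj by (auto simp: unitv_def inj_eq dest: injD)
  qed
qed

lemma domw_neg_unitv:
  assumes "1 \<le> j" "j \<le> N"
  shows "domw N (- unitv j) = - unitv N"
  unfolding domw_def
proof (rule the_equality)
  have "- unitv N = (- unitv j) \<circ> Transposition.transpose N j"
    using unitv_comp_transpose[of j N j] by (simp add: o_def fun_eq_iff)
  moreover have "Transposition.transpose N j permutes {1..N}" using assms by (intro permutes_swap_id) auto
  moreover have "dominant N (- unitv N)" using assms by (auto simp: dominant_def wts_def unitv_def)
  ultimately show "dominant N (- unitv N) \<and> (\<exists>\<sigma>. \<sigma> permutes {1..N} \<and> - unitv N = (- unitv j) \<circ> \<sigma>)" by blast
next
  fix mu assume "dominant N mu \<and> (\<exists>\<sigma>. \<sigma> permutes {1..N} \<and> mu = (- unitv j) \<circ> \<sigma>)"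
  then obtain \<sigma> where d: "dominant N mu" and s: "\<sigma> permutes {1..N}" and m: "mu = (- unitv j) \<circ> \<sigma>" by blast
  define k0 where "k0 = inv \<sigma> j"
  have sk0: "\<sigma> k0 = j" unfolding k0_def using s by (simp add: permutes_inverses(1))
  have k0: "k0 \<in> {1..N}" using s assms sk0 by (metis atLeastAtMost_iff permutes_in_image)
  have "mu N \<le> mu k0" using d k0 unfolding dominant_def by auto
  then have "mu N = -1" using sk0 m by (auto simp: unitv_def split: if_splits)
  then have s1: "\<sigma> N = j" using m by (auto simp: unitv_def split: if_splits)
  have inj: "inj \<sigma>" using s by (simp add: permutes_inj)
  show "mu = - unitv N"
  proof
    fix k show "mu k = (- unitv N) k" using m s1 inj by (auto simp: unitv_def inj_eq dest: injD)
  qed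
qed

lemma wle_pair:
  assumes "1 \<le> a" "a < b" "b \<le> N" "\<And>k. mu k - lam k = unitv a k - unitv b k"
  shows "wle N lam mu"
  unfolding wle_def
proof (intro exI allI)
  fix k
  define n where "n = (\<lambda>x y. if x = a \<and> y = b then 1 else (0::nat))"
  have "(\<Sum>x\<in>{1..N}. \<Sum>y\<in>{x<..N}. int (n x y) * (unitv x k - unitv y k))
      = (\<Sum>x\<in>{1..N}. if x = a then unitv a k - unitv b k else 0)"
  proof (rule sum.cong[OF refl])
    fix x assume x: "x \<in> {1..N}"
    show "(\<Sum>y\<in>{x<..N}. int (n x y) * (unitv x k - unitv y k)) = (if x = a then unitv a k - unitv b k else 0)"
    proof (cases "x = a")
      case True
      have "(\<Sum>y\<in>{x<..N}. int (n x y) * (unitv x k - unitv y k)) = (\<Sum>y\<in>{x<..N}. if y = b then unitv a k - unitv b k else 0)"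
        by (rule sum.cong) (auto simp: n_def True)
      also have "\<dots> = unitv a k - unitv b k" using assms True by simp
      finally show ?thesis using True by simp
    next
      case False then show ?thesis by (simp add: n_def)
    qed
  qed
  also have "\<dots> = unitv a k - unitv b k" using assms by simp
  finally show "mu k - lam k = (\<Sum>x\<in>{1..N}. \<Sum>y\<in>{x<..N}. int (n x y) * (unitv x k - unitv y k))"
    using assms(4) by simp
qed

lemma lessdot_unitv:
  assumes "1 \<le> j" "j < i" "i \<le> N"
  shows "lessdot N (unitv j) (unitv i)"
proof -
  have "domw N (unitv j) = domw N (unitv i)" using assms domw_unitv by simp
  moreover have "wlt N (unitv i) (unitv j)"
    unfolding wlt_def using assms by (auto intro!: wle_pair[of j i])
  ultimately show ?thesis unfolding lessdot_def by blast
qed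

lemma lessdot_neg_unitv:
  assumes "1 \<le> i" "i < m" "m \<le> N"
  shows "lessdot N (- unitv m) (- unitv i)"
proof -
  have "domw N (- unitv m) = domw N (- unitv i)" using assms domw_neg_unitv by simp
  moreover have "wlt N (- unitv i) (- unitv m)"
    unfolding wlt_def using assms by (auto intro!: wle_pair[of i m] simp: neg_unitv_eq_iff)
  ultimately show ?thesis unfolding lessdot_def by blast
qed

lemma leading_at_unitv:
  assumes "i \<le> N" "D (unitv i) \<noteq> 0" "\<And>lam. D lam \<noteq> 0 \<Longrightarrow> \<exists>j\<in>{1..i}. lam = unitv j"
  shows "leading_at N D (unitv i)"
  unfolding leading_at_def
proof (intro conjI allI impI)
  fix lam assume "lam \<noteq> unitv i \<and> D lam \<noteq> 0"
  then obtain j where "j \<in> {1..i}" "lam = unitv j" "j \<noteq> i" using assms(3) by blast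
  then show "lessdot N lam (unitv i)" using assms(1) by (auto intro!: lessdot_unitv)
qed (rule assms(2))

lemma leading_at_neg_unitv:
  assumes "1 \<le> i" "D (- unitv i) \<noteq> 0" "\<And>lam. D lam \<noteq> 0 \<Longrightarrow> \<exists>j\<in>{i..N}. lam = - unitv j"
  shows "leading_at N D (- unitv i)"
  unfolding leading_at_def
proof (intro conjI allI impI)
  fix lam assume "lam \<noteq> - unitv i \<and> D lam \<noteq> 0"
  then obtain j where "j \<in> {i..N}" "lam = - unitv j" "j \<noteq> i" using assms(3) by blast
  then show "lessdot N lam (- unitv i)" using assms(1) by (auto intro!: lessdot_neg_unitv)
qed (rule assms(2))

lemma Xop_leading_term: "1 \<le> i \<Longrightarrow> i \<le> N \<Longrightarrow> leading_at N (Res N (Xop N i)) (unitv i)"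
  by (rule leading_at_unitv[OF _ _ Res_Xop_support]) (simp_all add: Res_Xop_leading X_leading_nonzero)

lemma Xinv_leading_term: "1 \<le> i \<Longrightarrow> i \<le> N \<Longrightarrow> leading_at N (Res N (Xinv N i)) (- unitv i)"
  by (rule leading_at_neg_unitv[OF _ _ Res_Xinv_support]) (simp_all add: Res_Xinv_leading Xinv_leading_nonzero)

lemma Yop_leading_term: "1 \<le> i \<Longrightarrow> i \<le> N \<Longrightarrow> leading_at N (Res N (Yop N l \<epsilon> i)) (- unitv i)"
  by (rule leading_at_neg_unitv[OF _ _ Res_Yop_support])
    (simp_all add: Res_Yop_leading Xinv_leading_nonzero Y_factor_at_nonzero)

theorem proposition5p8:
  fixes N l :: nat and \<epsilon> :: complex
  assumes "1 \<le> N" and "1 \<le> l"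
    and "\<epsilon> ^ l = 1" and "\<forall>k. 0 < k \<and> k < l \<longrightarrow> \<epsilon> ^ k \<noteq> 1"
  shows
    "(\<forall>i\<in>{1..N}. has_expansion N (Xop N i) \<and>
        (\<forall>lam. Res N (Xop N i) lam \<noteq> 0 \<longrightarrow> (\<exists>j\<in>{1..i}. lam = unitv j)) \<and>
        leading_at N (Res N (Xop N i)) (unitv i))
     \<and> Res N (Xop N N) (unitv N) =
        (\<Prod>j\<in>{1..N} - {N}. (wv N - wv j - tt) / (wv N - wv j))
     \<and> (\<forall>i\<in>{1..N}. has_expansion N (Xinv N i) \<and>
        (\<forall>lam. Res N (Xinv N i) lam \<noteq> 0 \<longrightarrow> (\<exists>j\<in>{i..N}. lam = - unitv j)) \<and>
        leading_at N (Res N (Xinv N i)) (- unitv i))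
     \<and> Res N (Xinv N 1) (- unitv 1) =
        (\<Prod>j\<in>{1..N} - {1}. (wv 1 - wv j + tt) / (wv 1 - wv j))
     \<and> (\<forall>i\<in>{1..N}. has_expansion N (Yop N l \<epsilon> i) \<and>
        (\<forall>lam. Res N (Yop N l \<epsilon> i) lam \<noteq> 0 \<longrightarrow> (\<exists>j\<in>{i..N}. lam = - unitv j)) \<and>
        leading_at N (Res N (Yop N l \<epsilon> i)) (- unitv i))
     \<and> Res N (Yop N l \<epsilon> 1) (- unitv 1) =
        (\<Prod>k\<in>{1..l}. wv 1 - hb - zk l \<epsilon> k) *
        (\<Prod>j\<in>{1..N} - {1}. (wv 1 - wv j + tt) / (wv 1 - wv j))"
proof -
  have "{1..N} - {1} = {1<..N}" by auto
  then have leading_coefficients: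
      "Res N (Xop N N) (unitv N) = (\<Prod>j\<in>{1..N} - {N}. (wv N - wv j - tt) / (wv N - wv j))"
      "Res N (Xinv N 1) (- unitv 1) = (\<Prod>j\<in>{1..N} - {1}. (wv 1 - wv j + tt) / (wv 1 - wv j))"
      "Res N (Yop N l \<epsilon> 1) (- unitv 1) = (\<Prod>k\<in>{1..l}. wv 1 - hb - zk l \<epsilon> k) *
         (\<Prod>j\<in>{1..N} - {1}. (wv 1 - wv j + tt) / (wv 1 - wv j))"
    using Res_Xop_leading[of N N] Res_Xinv_leading[of 1 N] Res_Yop_leading[of 1 N l \<epsilon>] assms(1)
    by (simp_all add: X_leading_def Xinv_leading_def Y_factor_at_def)
  show ?thesis
    unfolding leading_coefficients
    using has_expansion_Xop Res_Xop_support Xop_leading_term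
      Res_Xinv Res_Xinv_support Xinv_leading_term Res_Yop Res_Yop_support Yop_leading_term
    by (simp add: Ball_def) blast
qed

end
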